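(* The number $|\Pi_{\mathfrak t}^+|$ of isotropy summands of the following flag manifolds of classical Lie groups is: (A) $SU(n)/S(U(n_1)\times\cdots\times U(n_s))$, $n=\sum n_i$: $s(s-1)/2$. (B i) $SO(2n+1)/U(n_1)\times\cdots\times U(n_s)\times U(1)^m$, $n\ge 2$: $(s+m)^2+s$. (B ii) $SO(2n+1)/U(n_1)\times\cdots\times U(n_s)\times U(1)^m\times SO(2t+1)$, $t\ge2$: $(s+m)^2+s$. (C i) $Sp(n)/U(n_1)\times\cdots\times U(n_s)\times U(1)^m$, $n\ge3$: $(s+m)^2$. (C ii) $Sp(n)/U(n_1)\times\cdots\times U(n_s)\times U(1)^m\times Sp(t)$, $t\ge3$: $(s+m)^2+(s+m)$. (D i) $SO(2n)/U(n_1)\times\cdots\times U(n_s)\times U(1)^m$, $n\ge4$: $(s+m)^2-m$. (D ii) $SO(2n)/U(n_1)\times\cdots\times U(n_s)\times U(1)^m\times SO(2t)$, $t\ge4$: $(s+m)^2+s$. Here in cases (B i), (C i), (D i) one has $\sum n_i+m=n$, $n_i>1$, $m,s\ge0$; in cases (B ii), (C ii), (D ii) one has $\sum n_i+t+m=n$, $n_i>1$, $m,s\ge0$.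
   Context: For a flag manifold $M=U/K$ of a compact semisimple Lie group, with complexified Lie algebra $\mathfrak g$, Cartan subalgebra $\mathfrak h$, root system $\Pi$, and isotropy algebra with complexification $\mathfrak k^{\mathbb C}=\mathfrak h\oplus\bigoplus_{\alpha\in\Pi_\Theta}\mathfrak g_\alpha$ (for a subset $\Pi_\Theta$ of roots generated by a set of simple roots), let $\Pi_M=\Pi\setminus\Pi_\Theta$, $\mathfrak t=\{H\in i\mathfrak h_{\mathbb R}:\alpha(H)=0\ \forall\alpha\in\Pi_\Theta\}$ (where $\mathfrak h_{\mathbb R}$ is the real span of the coroots), and $k$ the restriction of functionals to $\mathfrak t$. The t-roots are $\Pi_{\mathfrak t}=k(\Pi_M)$ and the positive t-roots $\Pi^+_{\mathfrak t}=k(\Pi_M\cap\Pi^+)$. Positive t-roots $\xi$ are in bijection with the irreducible summands $\mathfrak m_\xi=\sum_{k(\alpha)=\xi}\mathfrak u_\alpha$ (with $\mathfrak u_\alpha$ the real span of $X_\alpha-X_{-\alpha},\,i(X_\alpha+X_{-\alpha})$) of the isotropy representation on the tangent space $\mathfrak m=\bigoplus_\xi\mathfrak m_\xi$; the number of isotropy summands is $|\Pi^+_{\mathfrak t}|$. The subgroups are the standard block embeddings (the $U(n_i)$ and $U(1)$ factors corresponding to consecutive blocks of the coordinates $\varepsilon_1,\dots,\varepsilon_n$ of the standard Cartan subalgebra, the last factor $SO(2t+1)$, $Sp(t)$ or $SO(2t)$ to the last $t$ coordinates). *)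

theory Defs
  imports Complex_Main
begin

text \<open>Linear functionals on the standard Cartan subalgebra are represented by their
coordinates with respect to eps_0, ..., eps_(n-1) (0-based), as functions nat => real
vanishing beyond n. Elements H of t are represented the same way; the pairing is the
standard one: alpha(H) = sum_{j<n} alpha_j H_j.\<close>

definition eps :: "nat \<Rightarrow> nat \<Rightarrow> real" where
  "eps i = (\<lambda>k. if k = i then 1 else 0)"

definition pair :: "nat \<Rightarrow> (nat \<Rightarrow> real) \<Rightarrow> (nat \<Rightarrow> real) \<Rightarrow> real" where
  "pair n \<alpha> H = (\<Sum>j<n. \<alpha> j * H j)"

definition rootsA :: "nat \<Rightarrow> (nat \<Rightarrow> real) set" where
  "rootsA n = {(\<lambda>k. eps i k - eps j k) | i j. i < n \<and> j < n \<and> i \<noteq> j}"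
definition posA :: "nat \<Rightarrow> (nat \<Rightarrow> real) set" where
  "posA n = {(\<lambda>k. eps i k - eps j k) | i j. i < j \<and> j < n}"

definition rootsD :: "nat \<Rightarrow> (nat \<Rightarrow> real) set" where
  "rootsD n = {(\<lambda>k. a * eps i k + b * eps j k) | i j a b.
      i < n \<and> j < n \<and> i \<noteq> j \<and> a \<in> {1, -1} \<and> b \<in> {1, -1}}"
definition posD :: "nat \<Rightarrow> (nat \<Rightarrow> real) set" where
  "posD n = {(\<lambda>k. eps i k + b * eps j k) | i j b. i < j \<and> j < n \<and> b \<in> {1, -1}}"

definition rootsB :: "nat \<Rightarrow> (nat \<Rightarrow> real) set" where
  "rootsB n = rootsD n \<union> {(\<lambda>k. a * eps i k) | i a. i < n \<and> a \<in> {1, -1}}"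
definition posB :: "nat \<Rightarrow> (nat \<Rightarrow> real) set" where
  "posB n = posD n \<union> {eps i | i. i < n}"

definition rootsC :: "nat \<Rightarrow> (nat \<Rightarrow> real) set" where
  "rootsC n = rootsD n \<union> {(\<lambda>k. 2 * a * eps i k) | i a. i < n \<and> a \<in> {1, -1}}"
definition posC :: "nat \<Rightarrow> (nat \<Rightarrow> real) set" where
  "posC n = posD n \<union> {(\<lambda>k. 2 * eps i k) | i. i < n}"

text \<open>Last simple roots: eps_(n-1) (B), 2 eps_(n-1) (C), eps_(n-2)+eps_(n-1) (D);
the other simple roots are eps_i - eps_(i+1).\<close>
definition lastB :: "nat \<Rightarrow> nat \<Rightarrow> real" where "lastB n = eps (n - 1)"
definition lastC :: "nat \<Rightarrow> nat \<Rightarrow> real" where "lastC n = (\<lambda>k. 2 * eps (n - 1) k)"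
definition lastD :: "nat \<Rightarrow> nat \<Rightarrow> real" where "lastD n = (\<lambda>k. eps (n - 2) k + eps (n - 1) k)"

definition same_block :: "nat list \<Rightarrow> nat \<Rightarrow> nat \<Rightarrow> bool" where
  "same_block bs i j = (\<exists>k < length bs.
     sum_list (take k bs) \<le> i \<and> i < sum_list (take (Suc k) bs) \<and>
     sum_list (take k bs) \<le> j \<and> j < sum_list (take (Suc k) bs))"

definition block_simple_roots :: "nat list \<Rightarrow> (nat \<Rightarrow> real) set" where
  "block_simple_roots bs = {(\<lambda>k. eps i k - eps (Suc i) k) | i.
      Suc i < sum_list bs \<and> same_block bs i (Suc i)}"

definition PiTheta :: "(nat \<Rightarrow> real) set \<Rightarrow> (nat \<Rightarrow> real) set \<Rightarrow> (nat \<Rightarrow> real) set" where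
  "PiTheta Pi Th = {\<alpha> \<in> Pi. \<exists>c :: (nat \<Rightarrow> real) \<Rightarrow> int.
      \<alpha> = (\<lambda>k. \<Sum>\<beta>\<in>Th. of_int (c \<beta>) * \<beta> k)}"

definition tspace :: "nat \<Rightarrow> (nat \<Rightarrow> real) set \<Rightarrow> (nat \<Rightarrow> real) set \<Rightarrow> (nat \<Rightarrow> real) set" where
  "tspace n Pi Th = {H. (\<forall>j\<ge>n. H j = 0) \<and> (\<forall>\<alpha>\<in>PiTheta Pi Th. pair n \<alpha> H = 0)}"

definition kres :: "nat \<Rightarrow> (nat \<Rightarrow> real) set \<Rightarrow> (nat \<Rightarrow> real) \<Rightarrow> (nat \<Rightarrow> real) \<Rightarrow> real" where
  "kres n T \<alpha> = (\<lambda>H. if H \<in> T then pair n \<alpha> H else 0)"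

definition pos_t_roots :: "nat \<Rightarrow> (nat \<Rightarrow> real) set \<Rightarrow> (nat \<Rightarrow> real) set \<Rightarrow> (nat \<Rightarrow> real) set
    \<Rightarrow> ((nat \<Rightarrow> real) \<Rightarrow> real) set" where
  "pos_t_roots n Pi Pos Th = kres n (tspace n Pi Th) ` ((Pi - PiTheta Pi Th) \<inter> Pos)"

end

theory Submission
  imports Defs
begin

text \<open>An element of t is constant on the block of coordinates of each factor U(n_i) and vanishes on
the final SO/Sp block, so t is spanned by the indicator vectors of the U-blocks. Restricting
\<open>eps i\<close> to t therefore only remembers the block of i (and is 0 on the final block), and a positive
root lies in Pi_Theta exactly when its restriction vanishes. Writing \<open>e_x\<close> for the restriction
coming from the U-block x, the positive t-roots are \<open>e_x - e_y\<close> and \<open>e_x + e_y\<close> for x < y,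
\<open>2 e_x\<close> for the U-blocks with more than one coordinate (for all U-blocks in type C), and \<open>e_x\<close>
when there is a final block or in type B; in type A only the differences occur. Counting these
disjoint families gives the formulas.\<close>

section \<open>Blocks of coordinates\<close>

definition block_start :: "nat list \<Rightarrow> nat \<Rightarrow> nat" where
  "block_start bs a = sum_list (take a bs)"

definition block_of :: "nat list \<Rightarrow> nat \<Rightarrow> nat" where
  "block_of bs i = (LEAST a. i < block_start bs (Suc a))"

lemma block_start_0 [simp]: "block_start bs 0 = 0"
  by (simp add: block_start_def)

lemma block_start_Suc: "a < length bs \<Longrightarrow> block_start bs (Suc a) = block_start bs a + bs ! a"
  by (simp add: block_start_def take_Suc_conv_app_nth)

lemma block_start_length: "length bs \<le> a \<Longrightarrow> block_start bs a = sum_list bs"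
  by (simp add: block_start_def)

lemma block_start_mono: "a \<le> b \<Longrightarrow> block_start bs a \<le> block_start bs b"
proof -
  have "block_start bs c \<le> block_start bs (Suc c)" for c
    by (cases "c < length bs") (simp_all add: block_start_Suc block_start_length)
  then show "a \<le> b \<Longrightarrow> block_start bs a \<le> block_start bs b"
    by (rule lift_Suc_mono_le)
qed

lemma block_start_le_sum: "block_start bs a \<le> sum_list bs"
  using block_start_mono[of a "max a (length bs)" bs] block_start_length[of bs "max a (length bs)"]
  by simp

lemma block_start_strict_mono:
  assumes "\<forall>x\<in>set bs. 0 < x" "a < b" "a < length bs"
  shows "block_start bs a < block_start bs b"
proof -
  have "block_start bs a < block_start bs (Suc a)"
    using assms(1,3) by (simp add: block_start_Suc)
  also have "\<dots> \<le> block_start bs b"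
    using assms(2) by (simp add: block_start_mono)
  finally show ?thesis .
qed

lemma block_start_less_sum:
  "\<forall>x\<in>set bs. 0 < x \<Longrightarrow> a < length bs \<Longrightarrow> block_start bs a < sum_list bs"
  using block_start_strict_mono[of bs a "length bs"] block_start_length[of bs "length bs"] by simp

lemma block_of_bounds:
  assumes "i < sum_list bs"
  shows "block_of bs i < length bs" "block_start bs (block_of bs i) \<le> i"
    "i < block_start bs (Suc (block_of bs i))"
proof -
  have ex: "i < block_start bs (Suc (length bs - 1))"
    using assms block_start_length[of bs "Suc (length bs - 1)"] by simp
  show upper: "i < block_start bs (Suc (block_of bs i))"
    unfolding block_of_def by (rule LeastI[of "\<lambda>a. i < block_start bs (Suc a)", OF ex])
  have "block_of bs i \<le> length bs - 1"
    unfolding block_of_def by (rule Least_le[of "\<lambda>a. i < block_start bs (Suc a)", OF ex])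
  then show "block_of bs i < length bs"
    using assms by (cases bs) auto
  show "block_start bs (block_of bs i) \<le> i"
  proof (cases "block_of bs i")
    case (Suc c)
    then have "\<not> i < block_start bs (Suc c)"
      unfolding block_of_def by (metis lessI not_less_Least)
    then show ?thesis using Suc by simp
  qed simp
qed

lemma block_of_eqI:
  assumes "block_start bs a \<le> i" "i < block_start bs (Suc a)"
  shows "block_of bs i = a"
proof -
  have le: "block_of bs i \<le> a"
    unfolding block_of_def by (rule Least_le) (rule assms(2))
  have "i < sum_list bs"
    using assms(2) block_start_le_sum[of bs "Suc a"] by simp
  then have "i < block_start bs (Suc (block_of bs i))"
    by (rule block_of_bounds)
  moreover have "block_start bs (Suc (block_of bs i)) \<le> block_start bs a" if "block_of bs i \<noteq> a"
    using le that by (intro block_start_mono) simp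
  ultimately show ?thesis
    using assms(1) by fastforce
qed

lemma block_of_block_start:
  "\<forall>x\<in>set bs. 0 < x \<Longrightarrow> a < length bs \<Longrightarrow> block_of bs (block_start bs a) = a"
  by (intro block_of_eqI) (auto simp: block_start_Suc)

lemma block_of_mono:
  assumes "i \<le> j" "j < sum_list bs"
  shows "block_of bs i \<le> block_of bs j"
proof -
  have "i < block_start bs (Suc (block_of bs j))"
    using assms block_of_bounds(3)[OF assms(2)] by simp
  then show ?thesis
    unfolding block_of_def[of bs i] by (rule Least_le)
qed

lemma same_block_iff_block_of:
  "same_block bs i j \<longleftrightarrow> i < sum_list bs \<and> j < sum_list bs \<and> block_of bs i = block_of bs j"
proof
  assume "same_block bs i j"
  then obtain a where "block_start bs a \<le> i" "i < block_start bs (Suc a)"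
    "block_start bs a \<le> j" "j < block_start bs (Suc a)"
    unfolding same_block_def block_start_def by blast
  then show "i < sum_list bs \<and> j < sum_list bs \<and> block_of bs i = block_of bs j"
    using block_start_le_sum[of bs "Suc a"] block_of_eqI by fastforce
next
  assume "i < sum_list bs \<and> j < sum_list bs \<and> block_of bs i = block_of bs j"
  then show "same_block bs i j"
    using block_of_bounds[of i bs] block_of_bounds[of j bs]
    unfolding same_block_def block_start_def by metis
qed

lemma last_block_start: "length bs = Suc r \<Longrightarrow> block_start bs r + bs ! r = sum_list bs"
  using block_start_Suc[of r bs] block_start_length[of bs "Suc r"] by simp

lemma block_of_last_block:
  assumes "length bs = Suc r" "sum_list bs - bs ! r \<le> k" "k < sum_list bs"
  shows "block_of bs k = r"
  using assms last_block_start[OF assms(1)] by (intro block_of_eqI) (simp_all add: block_start_Suc)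

lemma last_coordinate_in_last_block:
  assumes "\<forall>x\<in>set bs. 0 < x" "length bs = Suc r"
  shows "sum_list bs - 1 < sum_list bs" "block_of bs (sum_list bs - 1) = r"
proof -
  have "0 < bs ! r"
    using assms by simp
  moreover have "block_start bs r + bs ! r = sum_list bs"
    by (rule last_block_start[OF assms(2)])
  ultimately show "sum_list bs - 1 < sum_list bs"
    by linarith
  with \<open>0 < bs ! r\<close> \<open>block_start bs r + bs ! r = sum_list bs\<close>
  show "block_of bs (sum_list bs - 1) = r"
    by (intro block_of_last_block[OF assms(2)]) linarith+
qed

lemma block_of_pairs:
  assumes pos: "\<forall>x\<in>set bs. 0 < x"
  shows "(\<lambda>(i, j). (block_of bs i, block_of bs j)) ` {(i, j). i < j \<and> j < sum_list bs} =
    {(x, y). x < y \<and> y < length bs} \<union> (\<lambda>x. (x, x)) ` {x. x < length bs \<and> 2 \<le> bs ! x}"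
    (is "?blocks = ?pairs \<union> ?diagonal")
proof (intro equalityI subsetI)
  fix p assume "p \<in> ?blocks"
  then obtain i j where ij: "i < j" "j < sum_list bs" and p: "p = (block_of bs i, block_of bs j)"
    by auto
  let ?x = "block_of bs j"
  have le: "block_of bs i \<le> ?x" and x: "?x < length bs"
    using ij block_of_mono block_of_bounds(1) by simp_all
  have "2 \<le> bs ! ?x" if "block_of bs i = ?x"
  proof -
    have "block_start bs ?x \<le> i" "j < block_start bs (Suc ?x)"
      using block_of_bounds(2)[of i bs] block_of_bounds(3)[OF ij(2)] ij that by simp_all
    then show ?thesis
      using ij(1) block_start_Suc[OF x] by simp
  qed
  then show "p \<in> ?pairs \<union> ?diagonal"
    using le x p by (cases "block_of bs i = ?x") auto
next
  fix p assume "p \<in> ?pairs \<union> ?diagonal"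
  then consider x y where "x < y" "y < length bs" "p = (x, y)"
    | x where "x < length bs" "2 \<le> bs ! x" "p = (x, x)"
    by auto
  then show "p \<in> ?blocks"
  proof cases
    case 1
    then show ?thesis
      using block_start_strict_mono[OF pos] block_start_less_sum[OF pos] block_of_block_start[OF pos]
      by (intro image_eqI[of _ _ "(block_start bs x, block_start bs y)"]) auto
  next
    case 2
    then have next_in_block: "block_start bs x + 1 < block_start bs (Suc x)"
      by (simp add: block_start_Suc)
    then have "block_of bs (block_start bs x + 1) = x"
      by (intro block_of_eqI) simp_all
    moreover have "block_start bs x + 1 < sum_list bs"
      using next_in_block block_start_le_sum[of bs "Suc x"] by simp
    ultimately show ?thesis
      using 2 block_of_block_start[OF pos]
      by (intro image_eqI[of _ _ "(block_start bs x, block_start bs x + 1)"]) auto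
  qed
qed

lemma block_of_image:
  assumes pos: "\<forall>x\<in>set bs. 0 < x"
  shows "block_of bs ` {..<sum_list bs} = {..<length bs}"
proof (intro equalityI subsetI)
  fix x assume "x \<in> {..<length bs}"
  then show "x \<in> block_of bs ` {..<sum_list bs}"
    using block_of_block_start[OF pos] block_start_less_sum[OF pos]
    by (intro image_eqI[of _ _ "block_start bs x"]) auto
qed (auto intro: block_of_bounds(1))

definition int_span :: "(nat \<Rightarrow> real) set \<Rightarrow> (nat \<Rightarrow> real) set" where
  "int_span Th = {\<alpha>. \<exists>c :: (nat \<Rightarrow> real) \<Rightarrow> int. \<alpha> = (\<lambda>k. \<Sum>\<beta>\<in>Th. of_int (c \<beta>) * \<beta> k)}"

lemma PiTheta_eq: "PiTheta Pi Th = Pi \<inter> int_span Th"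
  by (auto simp: PiTheta_def int_span_def)

lemma int_span_base:
  assumes "finite Th" "\<beta> \<in> Th"
  shows "\<beta> \<in> int_span Th"
proof -
  have "(\<Sum>\<gamma>\<in>Th. of_int (if \<gamma> = \<beta> then 1 else 0) * \<gamma> k) = (\<Sum>\<gamma>\<in>Th. if \<gamma> = \<beta> then \<beta> k else 0)" for k
    by (rule sum.cong) auto
  then have "(\<Sum>\<gamma>\<in>Th. of_int (if \<gamma> = \<beta> then 1 else 0) * \<gamma> k) = \<beta> k" for k
    using assms by simp
  then show ?thesis
    unfolding int_span_def by (auto intro!: exI[of _ "\<lambda>\<gamma>. if \<gamma> = \<beta> then 1 else 0"])
qed

lemma int_span_add:
  assumes "\<alpha> \<in> int_span Th" "\<beta> \<in> int_span Th"
  shows "(\<lambda>k. \<alpha> k + \<beta> k) \<in> int_span Th"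
proof -
  obtain c d where "\<alpha> = (\<lambda>k. \<Sum>\<gamma>\<in>Th. of_int (c \<gamma>) * \<gamma> k)" "\<beta> = (\<lambda>k. \<Sum>\<gamma>\<in>Th. of_int (d \<gamma>) * \<gamma> k)"
    using assms unfolding int_span_def by blast
  then have "(\<lambda>k. \<alpha> k + \<beta> k) = (\<lambda>k. \<Sum>\<gamma>\<in>Th. of_int (c \<gamma> + d \<gamma>) * \<gamma> k)"
    by (simp add: distrib_right sum.distrib)
  then show ?thesis
    unfolding int_span_def by (intro CollectI exI)
qed

lemma int_span_uminus:
  assumes "\<alpha> \<in> int_span Th"
  shows "(\<lambda>k. - \<alpha> k) \<in> int_span Th"
proof -
  obtain c where "\<alpha> = (\<lambda>k. \<Sum>\<gamma>\<in>Th. of_int (c \<gamma>) * \<gamma> k)"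
    using assms unfolding int_span_def by blast
  then have "(\<lambda>k. - \<alpha> k) = (\<lambda>k. \<Sum>\<gamma>\<in>Th. of_int (- c \<gamma>) * \<gamma> k)"
    by (simp add: sum_negf)
  then show ?thesis
    unfolding int_span_def by (intro CollectI exI)
qed

lemma int_span_zero: "(\<lambda>k. 0) \<in> int_span Th"
  unfolding int_span_def by (auto intro!: exI[of _ "\<lambda>_. 0"])

lemma eps_apply: "eps x a = (if a = x then 1 else 0)"
  by (simp add: eps_def)

lemma pair_add: "pair n (\<lambda>k. \<alpha> k + \<beta> k) H = pair n \<alpha> H + pair n \<beta> H"
  by (simp add: pair_def distrib_right sum.distrib)

lemma pair_diff: "pair n (\<lambda>k. \<alpha> k - \<beta> k) H = pair n \<alpha> H - pair n \<beta> H"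
  by (simp add: pair_def left_diff_distrib sum_subtractf)

lemma pair_scale: "pair n (\<lambda>k. c * \<alpha> k) H = c * pair n \<alpha> H"
  by (simp add: pair_def sum_distrib_left mult.assoc)

lemma pair_eps: "i < n \<Longrightarrow> pair n (eps i) H = H i"
  unfolding pair_def eps_def by (simp add: if_distrib[of "\<lambda>x. x * _"] cong: if_cong)

lemma sum_eps: "i < n \<Longrightarrow> (\<Sum>k<n. eps i k) = 1"
  by (simp add: eps_def)

lemma pair_int_span_eq_0:
  assumes "\<alpha> \<in> int_span Th" "\<forall>\<beta>\<in>Th. pair n \<beta> H = 0"
  shows "pair n \<alpha> H = 0"
proof -
  obtain c where "\<alpha> = (\<lambda>k. \<Sum>\<beta>\<in>Th. of_int (c \<beta>) * \<beta> k)"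
    using assms(1) unfolding int_span_def by blast
  then have "pair n \<alpha> H = (\<Sum>\<beta>\<in>Th. of_int (c \<beta>) * pair n \<beta> H)"
    by (simp add: pair_def sum_distrib_left sum_distrib_right mult.assoc sum.swap[of _ Th])
  then show ?thesis
    using assms(2) by simp
qed

lemma tspace_eq:
  assumes "finite Th" "Th \<subseteq> Pi"
  shows "tspace n Pi Th = {H. (\<forall>j\<ge>n. H j = 0) \<and> (\<forall>\<beta>\<in>Th. pair n \<beta> H = 0)}"
proof -
  have "Th \<subseteq> PiTheta Pi Th"
    using assms int_span_base by (auto simp: PiTheta_eq)
  then show ?thesis
    unfolding tspace_def PiTheta_eq by (auto intro: pair_int_span_eq_0)
qed

section \<open>Restriction to a spanning family of t\<close>

text \<open>Once the vectors \<open>E a\<close> (a < r) span t, \<open>t_coords n E r \<alpha>\<close> represents the restriction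
\<open>k(\<alpha>)\<close>.\<close>

definition t_coords :: "nat \<Rightarrow> (nat \<Rightarrow> nat \<Rightarrow> real) \<Rightarrow> nat \<Rightarrow> (nat \<Rightarrow> real) \<Rightarrow> nat \<Rightarrow> real" where
  "t_coords n E r \<alpha> = (\<lambda>a. if a < r then pair n \<alpha> (E a) else 0)"

lemma pair_eq_sum_coords:
  assumes "\<forall>k<n. H k = (\<Sum>a<r. c a * E a k)"
  shows "pair n \<alpha> H = (\<Sum>a<r. c a * pair n \<alpha> (E a))"
proof -
  have "pair n \<alpha> H = (\<Sum>k<n. \<alpha> k * (\<Sum>a<r. c a * E a k))"
    unfolding pair_def using assms by (intro sum.cong) auto
  also have "\<dots> = (\<Sum>a<r. c a * pair n \<alpha> (E a))"
    by (simp add: pair_def sum_distrib_left mult_ac sum.swap[of _ "{..<n}"])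
  finally show ?thesis .
qed

lemma kres_eq_if_t_coords_eq:
  assumes E_span: "\<And>H. H \<in> T \<Longrightarrow> \<exists>c. \<forall>k<n. H k = (\<Sum>a<r. c a * E a k)"
    and eq: "t_coords n E r \<alpha> = t_coords n E r \<beta>"
  shows "kres n T \<alpha> = kres n T \<beta>"
proof
  fix H
  show "kres n T \<alpha> H = kres n T \<beta> H"
  proof (cases "H \<in> T")
    case True
    then obtain c where "\<forall>k<n. H k = (\<Sum>a<r. c a * E a k)"
      using E_span by blast
    then have "pair n \<gamma> H = (\<Sum>a<r. c a * pair n \<gamma> (E a))" for \<gamma>
      by (rule pair_eq_sum_coords)
    moreover have "pair n \<alpha> (E a) = pair n \<beta> (E a)" if "a < r" for a
      using fun_cong[OF eq, of a] that by (simp add: t_coords_def)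
    ultimately have "pair n \<alpha> H = pair n \<beta> H"
      by simp
    then show ?thesis
      using True by (simp add: kres_def)
  qed (simp add: kres_def)
qed

lemma card_pos_t_roots_eq_card_t_coords:
  assumes Pos_roots: "Pos \<subseteq> Pi"
    and E_in_t: "\<And>a. a < r \<Longrightarrow> E a \<in> tspace n Pi Th"
    and E_span: "\<And>H. H \<in> tspace n Pi Th \<Longrightarrow> \<exists>c. \<forall>k<n. H k = (\<Sum>a<r. c a * E a k)"
    and vanishing: "\<And>\<alpha>. \<alpha> \<in> Pos \<Longrightarrow> t_coords n E r \<alpha> = (\<lambda>a. 0) \<Longrightarrow> \<alpha> \<in> PiTheta Pi Th"
  shows "card (pos_t_roots n Pi Pos Th) = card (t_coords n E r ` Pos - {\<lambda>a. 0})"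
proof -
  let ?T = "tspace n Pi Th"
  define S where "S = {\<alpha> \<in> Pos. t_coords n E r \<alpha> \<noteq> (\<lambda>a. 0)}"
  have "\<alpha> \<in> PiTheta Pi Th \<longleftrightarrow> t_coords n E r \<alpha> = (\<lambda>a. 0)" if "\<alpha> \<in> Pos" for \<alpha>
  proof
    assume "\<alpha> \<in> PiTheta Pi Th"
    then show "t_coords n E r \<alpha> = (\<lambda>a. 0)"
      using E_in_t unfolding tspace_def t_coords_def by auto
  qed (rule vanishing[OF that])
  then have S_eq: "(Pi - PiTheta Pi Th) \<inter> Pos = S"
    using Pos_roots unfolding S_def by auto
  define ev where "ev f = (\<lambda>a. if a < r then f (E a) else 0)" for f :: "(nat \<Rightarrow> real) \<Rightarrow> real"
  have ev_kres: "ev (kres n ?T \<alpha>) = t_coords n E r \<alpha>" for \<alpha>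
    using E_in_t unfolding ev_def kres_def t_coords_def by auto
  have "inj_on ev (kres n ?T ` S)"
  proof (rule inj_onI)
    fix x y assume "x \<in> kres n ?T ` S" "y \<in> kres n ?T ` S" and ev: "ev x = ev y"
    then obtain \<alpha> \<beta> where "x = kres n ?T \<alpha>" "y = kres n ?T \<beta>"
      by blast
    moreover from ev have "t_coords n E r \<alpha> = t_coords n E r \<beta>"
      unfolding calculation ev_kres .
    ultimately show "x = y"
      using kres_eq_if_t_coords_eq[OF E_span] by blast
  qed
  then have "card (kres n ?T ` S) = card (ev ` kres n ?T ` S)"
    by (rule card_image[symmetric])
  also have "ev ` kres n ?T ` S = t_coords n E r ` S"
    by (simp add: image_image ev_kres)
  also have "t_coords n E r ` S = t_coords n E r ` Pos - {\<lambda>a. 0}"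
    unfolding S_def by auto
  finally show ?thesis
    unfolding pos_t_roots_def S_eq .
qed

section \<open>The block indicators span t\<close>

definition block_indicator :: "nat list \<Rightarrow> nat \<Rightarrow> nat \<Rightarrow> real" where
  "block_indicator bs a = (\<lambda>k. if k < sum_list bs \<and> block_of bs k = a then 1 else 0)"

lemma block_simple_roots_finite: "finite (block_simple_roots bs)"
proof (rule finite_subset)
  show "block_simple_roots bs \<subseteq> (\<lambda>i k. eps i k - eps (Suc i) k) ` {..<sum_list bs}"
    unfolding block_simple_roots_def by auto
qed simp

lemma block_simple_roots_iff:
  "\<beta> \<in> block_simple_roots bs \<longleftrightarrow> (\<exists>i. \<beta> = (\<lambda>k. eps i k - eps (Suc i) k) \<and>
     Suc i < sum_list bs \<and> block_of bs i = block_of bs (Suc i))"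
  unfolding block_simple_roots_def same_block_iff_block_of by auto

lemma same_block_diff_in_int_span:
  assumes Th: "finite Th" "block_simple_roots bs \<subseteq> Th"
    and ij: "i < sum_list bs" "j < sum_list bs" "block_of bs i = block_of bs j"
  shows "(\<lambda>k. eps i k - eps j k) \<in> int_span Th"
proof -
  have ascending: "(\<lambda>k. eps i k - eps (i + d) k) \<in> int_span Th"
    if "i + d < sum_list bs" "block_of bs i = block_of bs (i + d)" for i d
    using that
  proof (induction d)
    case 0
    show ?case using int_span_zero by simp
  next
    case (Suc d)
    have prems: "Suc (i + d) < sum_list bs" "block_of bs i = block_of bs (Suc (i + d))"
      using Suc.prems by simp_all
    have "block_of bs i \<le> block_of bs (i + d)" "block_of bs (i + d) \<le> block_of bs (Suc (i + d))"
      using prems(1) by (auto intro: block_of_mono)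
    then have "block_of bs i = block_of bs (i + d)" "block_of bs (i + d) = block_of bs (Suc (i + d))"
      using prems by linarith+
    moreover have "(\<lambda>k. eps (i + d) k - eps (Suc (i + d)) k) \<in> block_simple_roots bs"
      using calculation prems(1) unfolding block_simple_roots_iff by blast
    ultimately have "(\<lambda>k. eps i k - eps (i + d) k) \<in> int_span Th"
      "(\<lambda>k. eps (i + d) k - eps (Suc (i + d)) k) \<in> int_span Th"
      using Suc prems Th by (auto intro: int_span_base)
    from int_span_add[OF this] show ?case by simp
  qed
  show ?thesis
  proof (cases "i \<le> j")
    case True
    then show ?thesis using ascending[of i "j - i"] ij by simp
  next
    case False
    then have "(\<lambda>k. eps j k - eps i k) \<in> int_span Th"
      using ascending[of j "i - j"] ij by simp
    from int_span_uminus[OF this] show ?thesis by simp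
  qed
qed

lemma tail_diff_in_int_span:
  assumes "finite Th" "block_simple_roots bs \<subseteq> Th" "length bs = Suc r"
    and "i < sum_list bs" "r \<le> block_of bs i" "p < sum_list bs" "block_of bs p = r"
  shows "(\<lambda>k. eps i k - eps p k) \<in> int_span Th"
proof -
  have "block_of bs i = block_of bs p"
    using assms(3-5,7) block_of_bounds(1)[of i bs] by simp
  then show ?thesis
    by (rule same_block_diff_in_int_span[OF assms(1,2,4,6)])
qed

lemma constant_on_blocks:
  assumes "finite Th" "block_simple_roots bs \<subseteq> Th" "\<forall>\<beta>\<in>Th. pair (sum_list bs) \<beta> H = 0"
    and "i < sum_list bs" "j < sum_list bs" "block_of bs i = block_of bs j"
  shows "H i = H j"
  using pair_int_span_eq_0[OF same_block_diff_in_int_span[OF assms(1,2,4-6)] assms(3)] assms(4,5)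
  by (simp add: pair_diff pair_eps)

lemma pair_block_simple_root_block_indicator:
  "\<beta> \<in> block_simple_roots bs \<Longrightarrow> pair (sum_list bs) \<beta> (block_indicator bs a) = 0"
  by (auto simp: block_simple_roots_iff pair_diff pair_eps block_indicator_def)

lemma block_indicator_expansion:
  assumes pos: "\<forall>x\<in>set bs. 0 < x" and k: "k < sum_list bs"
    and const: "\<And>i j. i < sum_list bs \<Longrightarrow> j < sum_list bs \<Longrightarrow> block_of bs i = block_of bs j \<Longrightarrow> H i = H j"
    and tail: "\<And>i. i < sum_list bs \<Longrightarrow> r \<le> block_of bs i \<Longrightarrow> H i = 0"
  shows "H k = (\<Sum>a<r. H (block_start bs a) * block_indicator bs a k)"
proof (cases "block_of bs k < r")
  case True
  let ?a = "block_of bs k"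
  have "(\<Sum>a<r. H (block_start bs a) * block_indicator bs a k) = H (block_start bs ?a)"
    using True k by (simp add: block_indicator_def if_distrib[of "\<lambda>x. _ * x"] cong: if_cong)
  also have "\<dots> = H k"
    using block_of_bounds(1)[OF k] block_start_less_sum[OF pos] block_of_block_start[OF pos] k
    by (intro const) auto
  finally show ?thesis ..
next
  case False
  then show ?thesis
    using tail[OF k] by (simp add: block_indicator_def)
qed

lemma card_pos_t_roots_blocks:
  fixes bs :: "nat list" and Lr :: "(nat \<Rightarrow> real) set"
  defines "Th \<equiv> block_simple_roots bs \<union> Lr"
  assumes pos: "\<forall>x\<in>set bs. 0 < x" and n: "n = sum_list bs" and fin: "finite Lr"
    and Th_roots: "Th \<subseteq> Pi" and Pos_roots: "Pos \<subseteq> Pi"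
    and Lr_orth: "\<And>\<beta> a. \<beta> \<in> Lr \<Longrightarrow> a < r \<Longrightarrow> pair n \<beta> (block_indicator bs a) = 0"
    and tail_zero: "\<And>H i. \<forall>\<beta>\<in>Th. pair n \<beta> H = 0 \<Longrightarrow> i < n \<Longrightarrow> r \<le> block_of bs i \<Longrightarrow> H i = 0"
    and vanishing: "\<And>\<alpha>. \<alpha> \<in> Pos \<Longrightarrow> t_coords n (block_indicator bs) r \<alpha> = (\<lambda>a. 0) \<Longrightarrow> \<alpha> \<in> int_span Th"
  shows "card (pos_t_roots n Pi Pos Th) = card (t_coords n (block_indicator bs) r ` Pos - {\<lambda>a. 0})"
proof (rule card_pos_t_roots_eq_card_t_coords[OF Pos_roots])
  have finTh: "finite Th" and bsr_Th: "block_simple_roots bs \<subseteq> Th"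
    using fin block_simple_roots_finite by (auto simp: Th_def)
  have t_eq: "tspace n Pi Th = {H. (\<forall>j\<ge>n. H j = 0) \<and> (\<forall>\<beta>\<in>Th. pair n \<beta> H = 0)}"
    by (rule tspace_eq[OF finTh Th_roots])
  show "block_indicator bs a \<in> tspace n Pi Th" if "a < r" for a
  proof -
    have "pair n \<beta> (block_indicator bs a) = 0" if "\<beta> \<in> Th" for \<beta>
      using that Lr_orth[OF _ \<open>a < r\<close>] pair_block_simple_root_block_indicator[of \<beta> bs a] n
      unfolding Th_def by blast
    then show ?thesis
      unfolding t_eq by (simp add: block_indicator_def n)
  qed
  show "\<exists>c. \<forall>k<n. H k = (\<Sum>a<r. c a * block_indicator bs a k)" if "H \<in> tspace n Pi Th" for H
  proof (intro exI allI impI)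
    have orth: "\<forall>\<beta>\<in>Th. pair n \<beta> H = 0"
      using that by (simp add: t_eq)
    show "H k = (\<Sum>a<r. H (block_start bs a) * block_indicator bs a k)" if "k < n" for k
      using constant_on_blocks[OF finTh bsr_Th] orth tail_zero[OF orth] that n
      by (intro block_indicator_expansion[OF pos]) auto
  qed
  show "\<alpha> \<in> PiTheta Pi Th" if "\<alpha> \<in> Pos" "t_coords n (block_indicator bs) r \<alpha> = (\<lambda>a. 0)" for \<alpha>
    using vanishing[OF that] that(1) Pos_roots by (auto simp: PiTheta_eq)
qed

lemma card_pos_t_roots_without_tail:
  assumes pos: "\<forall>x\<in>set bs. 0 < x" and n: "n = sum_list bs" and len: "length bs = r"
    and roots: "block_simple_roots bs \<subseteq> Pi" "Pos \<subseteq> Pi"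
    and vanishing: "\<And>\<alpha>. \<alpha> \<in> Pos \<Longrightarrow> t_coords n (block_indicator bs) r \<alpha> = (\<lambda>a. 0) \<Longrightarrow>
      \<alpha> \<in> int_span (block_simple_roots bs)"
  shows "card (pos_t_roots n Pi Pos (block_simple_roots bs)) =
    card (t_coords n (block_indicator bs) r ` Pos - {\<lambda>a. 0})"
proof -
  have "card (pos_t_roots n Pi Pos (block_simple_roots bs \<union> {})) =
    card (t_coords n (block_indicator bs) r ` Pos - {\<lambda>a. 0})"
  proof (rule card_pos_t_roots_blocks[OF pos n])
    show "H i = 0" if "i < n" "r \<le> block_of bs i" for H :: "nat \<Rightarrow> real" and i
      using block_of_bounds(1)[of i bs] that len n by simp
  qed (use roots vanishing in simp_all)
  then show ?thesis by simp
qed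

text \<open>\<open>\<delta>\<close> is the simple root of the final SO/Sp factor. It lives on the last block and its
coefficients have nonzero sum, so it forces the elements of t to vanish there.\<close>

lemma card_pos_t_roots_with_tail:
  fixes bs :: "nat list" and \<delta> :: "nat \<Rightarrow> real"
  defines "Th \<equiv> block_simple_roots bs \<union> {\<delta>}"
  assumes pos: "\<forall>x\<in>set bs. 0 < x" and n: "n = sum_list bs" and len: "length bs = Suc r"
    and \<delta>_supp: "\<And>k. \<delta> k \<noteq> 0 \<Longrightarrow> k < n \<and> block_of bs k = r"
    and \<delta>_sum: "(\<Sum>k<n. \<delta> k) \<noteq> 0"
    and roots: "Th \<subseteq> Pi" "Pos \<subseteq> Pi"
    and vanishing: "\<And>\<alpha>. \<alpha> \<in> Pos \<Longrightarrow> t_coords n (block_indicator bs) r \<alpha> = (\<lambda>a. 0) \<Longrightarrow>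
      \<alpha> \<in> int_span Th"
  shows "card (pos_t_roots n Pi Pos Th) = card (t_coords n (block_indicator bs) r ` Pos - {\<lambda>a. 0})"
  unfolding Th_def
proof (rule card_pos_t_roots_blocks[OF pos n])
  show "pair n \<beta> (block_indicator bs a) = 0" if "\<beta> \<in> {\<delta>}" "a < r" for \<beta> a
  proof -
    have "\<delta> k * block_indicator bs a k = 0" for k
      using \<delta>_supp[of k] that by (cases "\<delta> k = 0") (auto simp: block_indicator_def)
    then show ?thesis
      using that unfolding pair_def by (intro sum.neutral) auto
  qed
  show "H i = 0" if orth: "\<forall>\<beta>\<in>block_simple_roots bs \<union> {\<delta>}. pair n \<beta> H = 0"
    and i: "i < n" "r \<le> block_of bs i" for H i
  proof -
    have block_i: "block_of bs i = r"
      using block_of_bounds(1)[of i bs] i len n by simp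
    have "\<delta> k * H k = \<delta> k * H i" if "k < n" for k
    proof (cases "\<delta> k = 0")
      case False
      then have "H k = H i"
        using \<delta>_supp block_i block_simple_roots_finite orth i that n
        by (intro constant_on_blocks[of "block_simple_roots bs \<union> {\<delta>}"]) auto
      then show ?thesis by simp
    qed simp
    then have "pair n \<delta> H = (\<Sum>k<n. \<delta> k * H i)"
      unfolding pair_def by (intro sum.cong) auto
    then have "pair n \<delta> H = H i * (\<Sum>k<n. \<delta> k)"
      by (simp add: sum_distrib_left mult.commute)
    then show ?thesis
      using orth \<delta>_sum by simp
  qed
qed (use roots vanishing in \<open>simp_all add: Th_def\<close>)

section \<open>Roots with vanishing restriction\<close>

text \<open>Block r plays the role of the final SO/Sp block, on which t vanishes.\<close>

definition trunc_eps :: "nat \<Rightarrow> nat \<Rightarrow> nat \<Rightarrow> real" where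
  "trunc_eps r x = (if x < r then eps x else (\<lambda>_. 0))"

lemma t_coords_add: "t_coords n E r (\<lambda>k. \<alpha> k + \<beta> k) = (\<lambda>a. t_coords n E r \<alpha> a + t_coords n E r \<beta> a)"
  by (auto simp: t_coords_def pair_add)

lemma t_coords_diff: "t_coords n E r (\<lambda>k. \<alpha> k - \<beta> k) = (\<lambda>a. t_coords n E r \<alpha> a - t_coords n E r \<beta> a)"
  by (auto simp: t_coords_def pair_diff)

lemma t_coords_scale: "t_coords n E r (\<lambda>k. c * \<alpha> k) = (\<lambda>a. c * t_coords n E r \<alpha> a)"
  by (auto simp: t_coords_def pair_scale)

lemma t_coords_eps:
  assumes "i < sum_list bs"
  shows "t_coords (sum_list bs) (block_indicator bs) r (eps i) = trunc_eps r (block_of bs i)"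
  using pair_eps[OF assms, of "block_indicator bs _"] assms
  by (auto simp: t_coords_def trunc_eps_def block_indicator_def eps_def)

lemma trunc_eps_at: "x < r \<Longrightarrow> trunc_eps r x x = 1"
  by (simp add: trunc_eps_def eps_def)

lemma trunc_eps_nonneg: "0 \<le> trunc_eps r x a"
  by (simp add: trunc_eps_def eps_def)

lemma trunc_eps_diff_eq_0:
  assumes "(\<lambda>a. trunc_eps r x a - trunc_eps r y a) = (\<lambda>a. 0)"
  shows "x = y \<or> r \<le> x \<and> r \<le> y"
proof (rule ccontr)
  assume "\<not> (x = y \<or> r \<le> x \<and> r \<le> y)"
  then have "x \<noteq> y" "x < r \<or> y < r" by auto
  then obtain z where "z < r" "trunc_eps r x z - trunc_eps r y z \<noteq> 0"
    by (auto simp: trunc_eps_def eps_def)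
  then show False
    using assms by (metis (mono_tags))
qed

lemma trunc_eps_add_eq_0:
  assumes "(\<lambda>a. trunc_eps r x a + trunc_eps r y a) = (\<lambda>a. 0)"
  shows "r \<le> x \<and> r \<le> y"
proof (rule ccontr)
  assume "\<not> (r \<le> x \<and> r \<le> y)"
  then obtain z where "z < r" "z = x \<or> z = y" by (metis not_le)
  then have "trunc_eps r x z + trunc_eps r y z > 0"
    using trunc_eps_nonneg[of r x z] trunc_eps_nonneg[of r y z] trunc_eps_at[of z r] by auto
  then show False
    using assms by (metis less_irrefl)
qed

lemma trunc_eps_scale_eq_0:
  assumes "c \<noteq> 0" "(\<lambda>a. c * trunc_eps r x a) = (\<lambda>a. 0)"
  shows "r \<le> x"
proof (rule ccontr)
  assume "\<not> r \<le> x"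
  then have "c * trunc_eps r x x \<noteq> 0"
    using assms(1) by (simp add: trunc_eps_at)
  then show False
    using assms(2) by (metis (mono_tags))
qed

lemma posA_eq: "posA n = (\<lambda>(i, j) k. eps i k - eps j k) ` {(i, j). i < j \<and> j < n}"
  unfolding posA_def by auto

lemma posD_eq:
  "posD n = (\<lambda>(i, j) k. eps i k + eps j k) ` {(i, j). i < j \<and> j < n}
     \<union> (\<lambda>(i, j) k. eps i k - eps j k) ` {(i, j). i < j \<and> j < n}"
proof -
  have "(\<lambda>k. eps i k + b * eps j k) = (if b = 1 then (\<lambda>k. eps i k + eps j k) else (\<lambda>k. eps i k - eps j k))"
    if "b \<in> {1, -1}" for i j and b :: real
    using that by auto
  then show ?thesis
    unfolding posD_def by (auto 0 4 intro: exI[of _ "1::real"] exI[of _ "-1::real"])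
qed

lemma posA_subset_posD: "posA n \<subseteq> posD n"
  unfolding posA_eq posD_eq by blast

lemma posB_eq: "posB n = posD n \<union> eps ` {..<n}"
  unfolding posB_def by auto

lemma posC_eq: "posC n = posD n \<union> (\<lambda>i k. 2 * eps i k) ` {..<n}"
  unfolding posC_def by auto

lemma vanishing_posD_root:
  assumes \<alpha>: "\<alpha> \<in> posD n" and n: "n = sum_list bs" and len: "length bs \<le> Suc r"
    and zero: "t_coords n (block_indicator bs) r \<alpha> = (\<lambda>a. 0)"
  obtains i j where "i < n" "j < n" "block_of bs i = block_of bs j" "\<alpha> = (\<lambda>k. eps i k - eps j k)"
  | i j where "i < n" "j < n" "r \<le> block_of bs i" "r \<le> block_of bs j" "\<alpha> = (\<lambda>k. eps i k + eps j k)"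
proof -
  from \<alpha> obtain i j where "i < j" "j < n"
    and shape: "\<alpha> = (\<lambda>k. eps i k + eps j k) \<or> \<alpha> = (\<lambda>k. eps i k - eps j k)"
    unfolding posD_eq by auto
  then have ij: "i < n" "j < n"
    by simp_all
  have coords: "t_coords n (block_indicator bs) r (eps i) = trunc_eps r (block_of bs i)"
    "t_coords n (block_indicator bs) r (eps j) = trunc_eps r (block_of bs j)"
    using ij n t_coords_eps by simp_all
  show thesis
  proof (cases "\<alpha> = (\<lambda>k. eps i k - eps j k)")
    case True
    then have "block_of bs i = block_of bs j \<or> r \<le> block_of bs i \<and> r \<le> block_of bs j"
      using zero by (intro trunc_eps_diff_eq_0) (simp add: t_coords_diff coords)
    moreover have "block_of bs i < Suc r" "block_of bs j < Suc r"
      using block_of_bounds(1)[of _ bs] ij n len by (metis order_less_le_trans)+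
    ultimately have "block_of bs i = block_of bs j"
      by linarith
    then show thesis
      using that(1) ij True by blast
  next
    case False
    then have "\<alpha> = (\<lambda>k. eps i k + eps j k)"
      using shape by simp
    moreover have "r \<le> block_of bs i \<and> r \<le> block_of bs j"
      using zero calculation by (intro trunc_eps_add_eq_0) (simp add: t_coords_add coords)
    ultimately show thesis
      using that(2) ij by simp
  qed
qed

lemma vanishing_scaled_eps:
  assumes "c \<noteq> 0" "i < sum_list bs"
    and "t_coords (sum_list bs) (block_indicator bs) r (\<lambda>k. c * eps i k) = (\<lambda>a. 0)"
  shows "r \<le> block_of bs i"
  using assms by (intro trunc_eps_scale_eq_0[of c]) (simp_all add: t_coords_scale t_coords_eps)

lemma vanishing_posD_root_in_int_span:
  assumes \<alpha>: "\<alpha> \<in> posD n" and n: "n = sum_list bs" and len: "length bs \<le> Suc r"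
    and zero: "t_coords n (block_indicator bs) r \<alpha> = (\<lambda>a. 0)"
    and Th: "finite Th" "block_simple_roots bs \<subseteq> Th"
    and tail_sums: "\<And>i j. i < n \<Longrightarrow> j < n \<Longrightarrow> r \<le> block_of bs i \<Longrightarrow> r \<le> block_of bs j \<Longrightarrow>
      (\<lambda>k. eps i k + eps j k) \<in> int_span Th"
  shows "\<alpha> \<in> int_span Th"
  using \<alpha> n len zero
proof (rule vanishing_posD_root)
  show "\<alpha> \<in> int_span Th"
    if "i < n" "j < n" "block_of bs i = block_of bs j" "\<alpha> = (\<lambda>k. eps i k - eps j k)" for i j
    using that n by (simp add: same_block_diff_in_int_span[OF Th])
  show "\<alpha> \<in> int_span Th"
    if "i < n" "j < n" "r \<le> block_of bs i" "r \<le> block_of bs j" "\<alpha> = (\<lambda>k. eps i k + eps j k)" for i j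
    using tail_sums[OF that(1-4)] that(5) by simp
qed

lemma vanishing_root_without_tail:
  assumes n: "n = sum_list bs" and len: "length bs = r"
    and \<alpha>: "\<alpha> \<in> posD n \<union> {(\<lambda>k. c * eps i k) | c i. c \<noteq> 0 \<and> i < n}"
    and zero: "t_coords n (block_indicator bs) r \<alpha> = (\<lambda>a. 0)"
  shows "\<alpha> \<in> int_span (block_simple_roots bs)"
proof -
  have no_tail: "\<not> r \<le> block_of bs i" if "i < n" for i
    using block_of_bounds(1)[of i bs] that n len by simp
  show ?thesis
  proof (cases "\<alpha> \<in> posD n")
    case True
    show ?thesis
      by (rule vanishing_posD_root_in_int_span[OF True n _ zero block_simple_roots_finite subset_refl])
        (use len no_tail in simp_all)
  next
    case False
    then obtain c i where "c \<noteq> 0" "i < n" "\<alpha> = (\<lambda>k. c * eps i k)"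
      using \<alpha> by blast
    then show ?thesis
      using vanishing_scaled_eps[of c i bs r] zero no_tail n by simp
  qed
qed

lemma positive_roots_shapes:
  defines "scaled n \<equiv> {(\<lambda>k. c * eps i k) | c i. c \<noteq> 0 \<and> i < n}"
  shows "posA n \<subseteq> posD n \<union> scaled n" "posB n \<subseteq> posD n \<union> scaled n"
    "posC n \<subseteq> posD n \<union> scaled n" "posD n \<subseteq> posD n \<union> scaled n"
proof -
  have "(\<lambda>k. c * eps i k) \<in> scaled n" if "c \<noteq> 0" "i < n" for c i
    unfolding scaled_def using that by (intro CollectI exI[of _ c] exI[of _ i]) simp
  from this[of 1] this[of 2] have "eps ` {..<n} \<subseteq> scaled n" "(\<lambda>i k. 2 * eps i k) ` {..<n} \<subseteq> scaled n"
    by auto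
  then show "posA n \<subseteq> posD n \<union> scaled n" "posB n \<subseteq> posD n \<union> scaled n"
    "posC n \<subseteq> posD n \<union> scaled n" "posD n \<subseteq> posD n \<union> scaled n"
    unfolding posB_eq posC_eq using posA_subset_posD by blast+
qed

lemma vanishing_posB_root_with_tail:
  assumes \<alpha>: "\<alpha> \<in> posB n" and n: "n = sum_list bs" and len: "length bs = Suc r"
    and zero: "t_coords n (block_indicator bs) r \<alpha> = (\<lambda>a. 0)"
    and Th: "finite Th" "block_simple_roots bs \<subseteq> Th"
    and p: "p < n" "block_of bs p = r" and last: "eps p \<in> int_span Th"
  shows "\<alpha> \<in> int_span Th"
proof -
  have diff: "(\<lambda>k. eps i k - eps p k) \<in> int_span Th" if "i < n" "r \<le> block_of bs i" for i
    using tail_diff_in_int_span[OF Th len] that p n by simp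
  show ?thesis
  proof (cases "\<alpha> \<in> posD n")
    case True
    show ?thesis
    proof (rule vanishing_posD_root_in_int_span[OF True n _ zero Th])
      show "(\<lambda>k. eps i k + eps j k) \<in> int_span Th"
        if "i < n" "j < n" "r \<le> block_of bs i" "r \<le> block_of bs j" for i j
        using int_span_add[OF int_span_add[OF diff[OF that(1,3)] diff[OF that(2,4)]] int_span_add[OF last last]]
        by simp
    qed (use len in simp)
  next
    case False
    then obtain i where i: "i < n" "\<alpha> = eps i"
      using \<alpha> by (auto simp: posB_eq)
    then have "r \<le> block_of bs i"
      using zero n vanishing_scaled_eps[of 1 i bs r] by simp
    then show ?thesis
      using int_span_add[OF diff[OF i(1)] last] i(2) by simp
  qed
qed

lemma vanishing_posC_root_with_tail:
  assumes \<alpha>: "\<alpha> \<in> posC n" and n: "n = sum_list bs" and len: "length bs = Suc r"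
    and zero: "t_coords n (block_indicator bs) r \<alpha> = (\<lambda>a. 0)"
    and Th: "finite Th" "block_simple_roots bs \<subseteq> Th"
    and p: "p < n" "block_of bs p = r" and last: "(\<lambda>k. 2 * eps p k) \<in> int_span Th"
  shows "\<alpha> \<in> int_span Th"
proof -
  have diff: "(\<lambda>k. eps i k - eps p k) \<in> int_span Th" if "i < n" "r \<le> block_of bs i" for i
    using tail_diff_in_int_span[OF Th len] that p n by simp
  show ?thesis
  proof (cases "\<alpha> \<in> posD n")
    case True
    show ?thesis
    proof (rule vanishing_posD_root_in_int_span[OF True n _ zero Th])
      show "(\<lambda>k. eps i k + eps j k) \<in> int_span Th"
        if "i < n" "j < n" "r \<le> block_of bs i" "r \<le> block_of bs j" for i j
        using int_span_add[OF int_span_add[OF diff[OF that(1,3)] diff[OF that(2,4)]] last]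
        by simp
    qed (use len in simp)
  next
    case False
    then obtain i where i: "i < n" "\<alpha> = (\<lambda>k. 2 * eps i k)"
      using \<alpha> by (auto simp: posC_eq)
    then have "r \<le> block_of bs i"
      using zero n vanishing_scaled_eps[of 2 i bs r] by simp
    then show ?thesis
      using int_span_add[OF int_span_add[OF diff[OF i(1)] diff[OF i(1)]] last] i(2) by simp
  qed
qed

section \<open>The positive t-roots\<close>

definition eps_diffs :: "nat \<Rightarrow> (nat \<Rightarrow> real) set" where
  "eps_diffs r = (\<lambda>(x, y) a. eps x a - eps y a) ` {(x, y). x < y \<and> y < r}"

definition eps_sums :: "nat \<Rightarrow> (nat \<Rightarrow> real) set" where
  "eps_sums r = (\<lambda>(x, y) a. eps x a + eps y a) ` {(x, y). x < y \<and> y < r}"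

definition eps_doubles :: "nat set \<Rightarrow> (nat \<Rightarrow> real) set" where
  "eps_doubles X = (\<lambda>x a. 2 * eps x a) ` X"

lemma nonzero_at: "f x \<noteq> 0 \<Longrightarrow> f \<noteq> (\<lambda>a. 0)"
  by auto

lemma zero_notin_eps_families:
  "(\<lambda>a. 0) \<notin> eps_diffs r" "(\<lambda>a. 0) \<notin> eps_sums r" "(\<lambda>a. 0) \<notin> eps_doubles X" "(\<lambda>a. 0) \<notin> eps ` Y"
proof -
  have "(\<lambda>a. eps x a - eps y a) \<noteq> (\<lambda>a. 0)" if "x \<noteq> y" for x y
    using that by (intro nonzero_at[of _ x]) (simp add: eps_apply)
  moreover have "(\<lambda>a. eps x a + eps y a) \<noteq> (\<lambda>a. 0)" "(\<lambda>a. 2 * eps x a) \<noteq> (\<lambda>a. 0)" "eps x \<noteq> (\<lambda>a. 0)"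
    for x y
    by (intro nonzero_at[of _ x]; simp add: eps_apply)+
  ultimately show "(\<lambda>a. 0) \<notin> eps_diffs r" "(\<lambda>a. 0) \<notin> eps_sums r" "(\<lambda>a. 0) \<notin> eps_doubles X"
    "(\<lambda>a. 0) \<notin> eps ` Y"
    unfolding eps_diffs_def eps_sums_def eps_doubles_def by (auto dest: sym)
qed

lemma trunc_eps_diff_image:
  assumes L: "r \<le> L" "L \<le> Suc r"
  shows "(\<lambda>(x, y) a. trunc_eps r x a - trunc_eps r y a) `
      ({(x, y). x < y \<and> y < L} \<union> (\<lambda>x. (x, x)) ` D) - {\<lambda>a. 0}
    = eps_diffs r \<union> (if r < L then eps ` {..<r} else {})" (is "?image - _ = ?rhs")
proof (intro equalityI subsetI)
  fix v assume "v \<in> ?image - {\<lambda>a. 0}"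
  then obtain x y where xy: "x < y" "y < L" "v = (\<lambda>a. trunc_eps r x a - trunc_eps r y a)"
    and v: "v \<noteq> (\<lambda>a. 0)"
    by auto
  consider "y < r" | "x < r" "y = r" "r < L" | "r \<le> x"
    using xy L by linarith
  then show "v \<in> ?rhs"
  proof cases
    case 1
    then show ?thesis
      using xy by (auto simp: eps_diffs_def trunc_eps_def)
  next
    case 2
    then show ?thesis
      using xy by (auto simp: trunc_eps_def)
  qed (use xy v in \<open>simp add: trunc_eps_def\<close>)
next
  fix v assume v: "v \<in> ?rhs"
  then consider x y where "x < y" "y < r" "v = (\<lambda>a. eps x a - eps y a)"
    | x where "x < r" "r < L" "v = eps x"
    by (auto simp: eps_diffs_def split: if_splits)
  then have "v \<in> ?image"
  proof cases
    case 1
    then show ?thesis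
      using L by (intro image_eqI[of _ _ "(x, y)"]) (auto simp: trunc_eps_def)
  next
    case 2
    then show ?thesis
      by (intro image_eqI[of _ _ "(x, r)"]) (auto simp: trunc_eps_def)
  qed
  moreover have "(\<lambda>a. 0) \<notin> ?rhs"
    using zero_notin_eps_families by simp
  ultimately show "v \<in> ?image - {\<lambda>a. 0}"
    using v by blast
qed

lemma trunc_eps_sum_nonzero:
  assumes L: "L \<le> Suc r"
    and v: "v \<in> (\<lambda>(x, y) a. trunc_eps r x a + trunc_eps r y a) `
      ({(x, y). x < y \<and> y < L} \<union> (\<lambda>x. (x, x)) ` D)" "v \<noteq> (\<lambda>a. 0)"
  shows "v \<in> eps_sums r \<union> eps_doubles (D \<inter> {..<r}) \<union> (if r < L then eps ` {..<r} else {})"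
proof -
  from v(1) consider x y where "x < y" "y < L" "v = (\<lambda>a. trunc_eps r x a + trunc_eps r y a)"
    | x where "x \<in> D" "v = (\<lambda>a. trunc_eps r x a + trunc_eps r x a)"
    by auto
  then show ?thesis
  proof cases
    case (1 x y)
    then consider "y < r" | "x < r" "y = r" "r < L" | "r \<le> x"
      using L by linarith
    then show ?thesis
    proof cases
      case 1
      then show ?thesis
        using \<open>x < y\<close> \<open>v = _\<close> by (auto simp: eps_sums_def trunc_eps_def)
    next
      case 2
      then show ?thesis
        using \<open>v = _\<close> by (auto simp: trunc_eps_def)
    qed (use 1 v(2) in \<open>simp add: trunc_eps_def\<close>)
  next
    case (2 x)
    then have "x < r"
      using v(2) by (auto simp: trunc_eps_def split: if_splits)
    then show ?thesis
      using 2 by (auto simp: eps_doubles_def trunc_eps_def)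
  qed
qed

lemma trunc_eps_sum_image:
  assumes L: "r \<le> L" "L \<le> Suc r"
  shows "(\<lambda>(x, y) a. trunc_eps r x a + trunc_eps r y a) `
      ({(x, y). x < y \<and> y < L} \<union> (\<lambda>x. (x, x)) ` D) - {\<lambda>a. 0}
    = eps_sums r \<union> eps_doubles (D \<inter> {..<r}) \<union> (if r < L then eps ` {..<r} else {})"
    (is "?image - _ = ?rhs")
proof (intro equalityI subsetI)
  fix v assume "v \<in> ?image - {\<lambda>a. 0}"
  then show "v \<in> ?rhs"
    using trunc_eps_sum_nonzero[OF L(2)] by blast
next
  fix v assume v: "v \<in> ?rhs"
  then consider x y where "x < y" "y < r" "v = (\<lambda>a. eps x a + eps y a)"
    | x where "x \<in> D" "x < r" "v = (\<lambda>a. 2 * eps x a)"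
    | x where "x < r" "r < L" "v = eps x"
    by (auto simp: eps_sums_def eps_doubles_def split: if_splits)
  then have "v \<in> ?image"
  proof cases
    case 1
    then show ?thesis
      using L by (intro image_eqI[of _ _ "(x, y)"]) (auto simp: trunc_eps_def)
  next
    case 2
    then show ?thesis
      by (intro image_eqI[of _ _ "(x, x)"]) (auto simp: trunc_eps_def)
  next
    case 3
    then show ?thesis
      by (intro image_eqI[of _ _ "(x, r)"]) (auto simp: trunc_eps_def)
  qed
  moreover have "(\<lambda>a. 0) \<notin> ?rhs"
    using zero_notin_eps_families by simp
  ultimately show "v \<in> ?image - {\<lambda>a. 0}"
    using v by blast
qed

lemma trunc_eps_image:
  assumes "r \<le> L"
  shows "trunc_eps r ` {..<L} - {\<lambda>a. 0} = eps ` {..<r}"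
proof (intro equalityI subsetI)
  fix v assume "v \<in> eps ` {..<r}"
  then obtain x where "x < r" "v = eps x"
    by auto
  moreover have "v \<noteq> (\<lambda>a. 0)"
    using calculation by (intro nonzero_at[of _ x]) (simp add: eps_def)
  ultimately show "v \<in> trunc_eps r ` {..<L} - {\<lambda>a. 0}"
    using assms by (intro DiffI image_eqI[of _ _ x]) (auto simp: trunc_eps_def)
qed (auto simp: trunc_eps_def)

lemma trunc_eps_double_image:
  assumes "r \<le> L"
  shows "(\<lambda>x a. 2 * trunc_eps r x a) ` {..<L} - {\<lambda>a. 0} = eps_doubles {..<r}"
proof (intro equalityI subsetI)
  fix v assume "v \<in> eps_doubles {..<r}"
  then obtain x where "x < r" "v = (\<lambda>a. 2 * eps x a)"
    by (auto simp: eps_doubles_def)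
  moreover have "v \<noteq> (\<lambda>a. 0)"
    using calculation by (intro nonzero_at[of _ x]) (simp add: eps_def)
  ultimately show "v \<in> (\<lambda>x a. 2 * trunc_eps r x a) ` {..<L} - {\<lambda>a. 0}"
    using assms by (intro DiffI image_eqI[of _ _ x]) (auto simp: trunc_eps_def)
qed (auto simp: trunc_eps_def eps_doubles_def)

lemma t_coords_image_eps_pairs:
  assumes pos: "\<forall>x\<in>set bs. 0 < x" and n: "n = sum_list bs"
  defines "block_pairs \<equiv> {(x, y). x < y \<and> y < length bs} \<union> (\<lambda>x. (x, x)) ` {x. x < length bs \<and> 2 \<le> bs ! x}"
  shows "t_coords n (block_indicator bs) r ` (\<lambda>(i, j) k. eps i k - eps j k) ` {(i, j). i < j \<and> j < n}
      = (\<lambda>(x, y) a. trunc_eps r x a - trunc_eps r y a) ` block_pairs"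
    and "t_coords n (block_indicator bs) r ` (\<lambda>(i, j) k. eps i k + eps j k) ` {(i, j). i < j \<and> j < n}
      = (\<lambda>(x, y) a. trunc_eps r x a + trunc_eps r y a) ` block_pairs"
  unfolding block_pairs_def block_of_pairs[OF pos, symmetric] image_image n
  by (auto simp: t_coords_diff t_coords_add t_coords_eps intro!: image_cong)

lemma t_coords_image_posA:
  assumes pos: "\<forall>x\<in>set bs. 0 < x" and n: "n = sum_list bs" and L: "r \<le> length bs" "length bs \<le> Suc r"
  shows "t_coords n (block_indicator bs) r ` posA n - {\<lambda>a. 0} =
    eps_diffs r \<union> (if r < length bs then eps ` {..<r} else {})"
  unfolding posA_eq t_coords_image_eps_pairs[OF pos n] by (rule trunc_eps_diff_image[OF L])

lemma t_coords_image_posD: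
  assumes pos: "\<forall>x\<in>set bs. 0 < x" and n: "n = sum_list bs" and L: "r \<le> length bs" "length bs \<le> Suc r"
  shows "t_coords n (block_indicator bs) r ` posD n - {\<lambda>a. 0} =
    eps_diffs r \<union> eps_sums r \<union> eps_doubles {x. x < r \<and> 2 \<le> bs ! x} \<union>
    (if r < length bs then eps ` {..<r} else {})"
proof -
  let ?V = "t_coords n (block_indicator bs) r" and ?P = "{(i, j). i < j \<and> j < n}"
  have "?V ` posD n - {\<lambda>a. 0} =
    (?V ` (\<lambda>(i, j) k. eps i k + eps j k) ` ?P - {\<lambda>a. 0}) \<union>
    (?V ` (\<lambda>(i, j) k. eps i k - eps j k) ` ?P - {\<lambda>a. 0})"
    unfolding posD_eq by blast
  also have "\<dots> = (eps_sums r \<union> eps_doubles ({x. x < length bs \<and> 2 \<le> bs ! x} \<inter> {..<r}) \<union>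
      (if r < length bs then eps ` {..<r} else {})) \<union>
      (eps_diffs r \<union> (if r < length bs then eps ` {..<r} else {}))"
    unfolding t_coords_image_eps_pairs[OF pos n] trunc_eps_diff_image[OF L] trunc_eps_sum_image[OF L] ..
  also have "{x. x < length bs \<and> 2 \<le> bs ! x} \<inter> {..<r} = {x. x < r \<and> 2 \<le> bs ! x}"
    using L by auto
  finally show ?thesis
    by blast
qed

lemma t_coords_image_posB:
  assumes pos: "\<forall>x\<in>set bs. 0 < x" and n: "n = sum_list bs" and L: "r \<le> length bs" "length bs \<le> Suc r"
  shows "t_coords n (block_indicator bs) r ` posB n - {\<lambda>a. 0} =
    eps_diffs r \<union> eps_sums r \<union> eps_doubles {x. x < r \<and> 2 \<le> bs ! x} \<union> eps ` {..<r}"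
proof -
  let ?V = "t_coords n (block_indicator bs) r"
  have "?V ` eps ` {..<n} = trunc_eps r ` block_of bs ` {..<n}"
    unfolding image_image n by (auto simp: t_coords_eps intro!: image_cong)
  then have singles: "?V ` eps ` {..<n} - {\<lambda>a. 0} = eps ` {..<r}"
    using trunc_eps_image[OF L(1)] block_of_image[OF pos] n by simp
  have "?V ` posB n - {\<lambda>a. 0} = (?V ` posD n - {\<lambda>a. 0}) \<union> (?V ` eps ` {..<n} - {\<lambda>a. 0})"
    unfolding posB_eq by blast
  then show ?thesis
    unfolding singles t_coords_image_posD[OF assms] by auto
qed

lemma t_coords_image_posC:
  assumes pos: "\<forall>x\<in>set bs. 0 < x" and n: "n = sum_list bs" and L: "r \<le> length bs" "length bs \<le> Suc r"
  shows "t_coords n (block_indicator bs) r ` posC n - {\<lambda>a. 0} =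
    eps_diffs r \<union> eps_sums r \<union> eps_doubles {..<r} \<union> (if r < length bs then eps ` {..<r} else {})"
proof -
  let ?V = "t_coords n (block_indicator bs) r"
  have "?V ` (\<lambda>i k. 2 * eps i k) ` {..<n} = (\<lambda>x a. 2 * trunc_eps r x a) ` block_of bs ` {..<n}"
    unfolding image_image n by (auto simp: t_coords_scale t_coords_eps intro!: image_cong)
  then have doubles: "?V ` (\<lambda>i k. 2 * eps i k) ` {..<n} - {\<lambda>a. 0} = eps_doubles {..<r}"
    using trunc_eps_double_image[OF L(1)] block_of_image[OF pos] n by simp
  have "?V ` posC n - {\<lambda>a. 0} =
      (?V ` posD n - {\<lambda>a. 0}) \<union> (?V ` (\<lambda>i k. 2 * eps i k) ` {..<n} - {\<lambda>a. 0})"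
    unfolding posC_eq by blast
  moreover have "eps_doubles {x. x < r \<and> 2 \<le> bs ! x} \<subseteq> eps_doubles {..<r}"
    unfolding eps_doubles_def by auto
  ultimately show ?thesis
    unfolding doubles t_coords_image_posD[OF assms] by auto
qed

lemma card_less_pairs: "2 * card {(x, y::nat). x < y \<and> y < r} = r * (r - 1)"
proof (induction r)
  case (Suc r)
  have "{(x, y). x < y \<and> y < Suc r} = {(x, y). x < y \<and> y < r} \<union> (\<lambda>x. (x, r)) ` {..<r}"
    by auto
  moreover have "finite {(x, y::nat). x < y \<and> y < r}"
    by (rule finite_subset[of _ "{..<r} \<times> {..<r}"]) auto
  moreover have "card ((\<lambda>x. (x, r)) ` {..<r}) = r"
    by (simp add: card_image inj_on_def)
  moreover have "{(x, y). x < y \<and> y < r} \<inter> (\<lambda>x. (x, r)) ` {..<r} = {}"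
    by auto
  ultimately have "card {(x, y). x < y \<and> y < Suc r} = card {(x, y). x < y \<and> y < r} + r"
    by (simp add: card_Un_disjoint)
  then show ?case
    using Suc.IH by (cases r) simp_all
qed simp

lemma card_eps_diffs: "card (eps_diffs r) = card {(x, y::nat). x < y \<and> y < r}"
  unfolding eps_diffs_def
proof (rule card_image, rule inj_onI, clarsimp)
  fix x y u v assume "x < y" "u < v" and eq: "(\<lambda>a. eps x a - eps y a) = (\<lambda>a. eps u a - eps v a)"
  then show "x = u \<and> y = v"
    using fun_cong[OF eq, of x] fun_cong[OF eq, of y] by (auto simp: eps_apply split: if_splits)
qed

lemma card_eps_sums: "card (eps_sums r) = card {(x, y::nat). x < y \<and> y < r}"
  unfolding eps_sums_def
proof (rule card_image, rule inj_onI, clarsimp)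
  fix x y u v assume "x < y" "u < v" and eq: "(\<lambda>a. eps x a + eps y a) = (\<lambda>a. eps u a + eps v a)"
  then show "x = u \<and> y = v"
    using fun_cong[OF eq, of x] fun_cong[OF eq, of y] fun_cong[OF eq, of u]
    by (auto simp: eps_apply split: if_splits)
qed

lemma card_eps_image: "card (eps ` X) = card X"
  by (rule card_image, rule inj_onI) (metis eps_apply zero_neq_one)

lemma card_eps_doubles: "card (eps_doubles X) = card X"
  unfolding eps_doubles_def
  by (rule card_image, rule inj_onI) (metis eps_apply mult_cancel_left zero_neq_one zero_neq_numeral)

lemma eps_diffs_disjoint_nonneg:
  assumes "\<And>f a. f \<in> S \<Longrightarrow> 0 \<le> f a"
  shows "eps_diffs r \<inter> S = {}"
proof -
  have False if "x < y" "(\<lambda>a. eps x a - eps y a) \<in> S" for x y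
    using assms[OF that(2), of y] that(1) by (simp add: eps_apply)
  then show ?thesis
    unfolding eps_diffs_def by auto
qed

lemma eps_families_disjoint:
  "eps_diffs r \<inter> eps_sums r' = {}" "eps_diffs r \<inter> eps_doubles X = {}" "eps_diffs r \<inter> eps ` Y = {}"
  "eps_sums r \<inter> eps_doubles X = {}" "eps_sums r \<inter> eps ` Y = {}" "eps_doubles X \<inter> eps ` Y = {}"
proof -
  show "eps_diffs r \<inter> eps_sums r' = {}" "eps_diffs r \<inter> eps_doubles X = {}" "eps_diffs r \<inter> eps ` Y = {}"
    by (auto intro!: eps_diffs_disjoint_nonneg simp: eps_sums_def eps_doubles_def eps_apply)
  have "(\<lambda>a. eps x a + eps y a) \<noteq> (\<lambda>a. 2 * eps u a)" if "x < y" for x y u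
  proof
    assume "(\<lambda>a. eps x a + eps y a) = (\<lambda>a. 2 * eps u a)"
    from fun_cong[OF this, of x] that show False
      by (simp add: eps_apply split: if_splits)
  qed
  then show "eps_sums r \<inter> eps_doubles X = {}"
    unfolding eps_sums_def eps_doubles_def by auto
  have "(\<lambda>a. eps x a + eps y a) \<noteq> eps u" if "x < y" for x y u
  proof
    assume "(\<lambda>a. eps x a + eps y a) = eps u"
    from fun_cong[OF this, of x] fun_cong[OF this, of y] that show False
      by (simp add: eps_apply split: if_splits)
  qed
  then show "eps_sums r \<inter> eps ` Y = {}"
    unfolding eps_sums_def by auto
  have "(\<lambda>a. 2 * eps x a) \<noteq> eps u" for x u
  proof
    assume "(\<lambda>a. 2 * eps x a) = eps u"
    from fun_cong[OF this, of u] show False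
      by (simp add: eps_apply split: if_splits)
  qed
  then show "eps_doubles X \<inter> eps ` Y = {}"
    unfolding eps_doubles_def by auto
qed

lemma card_eps_families:
  assumes "finite X" "finite Y"
  shows "card (eps_diffs r \<union> eps_sums r \<union> eps_doubles X \<union> eps ` Y) = r * (r - 1) + card X + card Y"
proof -
  have fin_pairs: "finite {(x, y::nat). x < y \<and> y < r}"
    by (rule finite_subset[of _ "{..<r} \<times> {..<r}"]) auto
  then have fin: "finite (eps_diffs r)" "finite (eps_sums r)" "finite (eps_doubles X)" "finite (eps ` Y)"
    using assms by (simp_all add: eps_diffs_def eps_sums_def eps_doubles_def)
  have "card (eps_diffs r \<union> eps_sums r \<union> eps_doubles X \<union> eps ` Y) =
      card (eps_diffs r) + card (eps_sums r) + card (eps_doubles X) + card (eps ` Y)"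
    using fin eps_families_disjoint by (simp add: card_Un_disjoint Int_Un_distrib2)
  also have "\<dots> = r * (r - 1) + card X + card Y"
    using card_less_pairs[of r]
    by (simp add: card_eps_diffs card_eps_sums card_eps_doubles card_eps_image)
  finally show ?thesis .
qed

lemma rootsD_diff: "i < n \<Longrightarrow> j < n \<Longrightarrow> i \<noteq> j \<Longrightarrow> (\<lambda>k. eps i k - eps j k) \<in> rootsD n"
  unfolding rootsD_def by (intro CollectI exI[of _ i] exI[of _ j] exI[of _ "1::real"] exI[of _ "-1::real"]) auto

lemma rootsD_sum: "i < n \<Longrightarrow> j < n \<Longrightarrow> i \<noteq> j \<Longrightarrow> (\<lambda>k. eps i k + eps j k) \<in> rootsD n"
  unfolding rootsD_def by (intro CollectI exI[of _ i] exI[of _ j] exI[of _ "1::real"] exI[of _ "1::real"]) auto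

lemma rootsD_subset: "rootsD n \<subseteq> rootsB n" "rootsD n \<subseteq> rootsC n"
  unfolding rootsB_def rootsC_def by auto

lemma eps_in_rootsB: "i < n \<Longrightarrow> eps i \<in> rootsB n"
  unfolding rootsB_def by (auto intro!: exI[of _ "1::real"])

lemma double_eps_in_rootsC: "i < n \<Longrightarrow> (\<lambda>k. 2 * eps i k) \<in> rootsC n"
  unfolding rootsC_def by (auto intro!: exI[of _ "1::real"])

lemma rootsA_diff: "i < n \<Longrightarrow> j < n \<Longrightarrow> i \<noteq> j \<Longrightarrow> (\<lambda>k. eps i k - eps j k) \<in> rootsA n"
  unfolding rootsA_def by blast

lemma block_simple_roots_subset_rootsA: "block_simple_roots bs \<subseteq> rootsA (sum_list bs)"
  by (auto simp: block_simple_roots_iff intro!: rootsA_diff)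

lemma block_simple_roots_subset_rootsD: "block_simple_roots bs \<subseteq> rootsD (sum_list bs)"
  by (auto simp: block_simple_roots_iff intro!: rootsD_diff)

lemma block_simple_roots_subset_rootsBC:
  "block_simple_roots bs \<subseteq> rootsB (sum_list bs)" "block_simple_roots bs \<subseteq> rootsC (sum_list bs)"
  using block_simple_roots_subset_rootsD rootsD_subset by blast+

lemma positive_roots_subset:
  "posA n \<subseteq> rootsA n" "posD n \<subseteq> rootsD n" "posB n \<subseteq> rootsB n" "posC n \<subseteq> rootsC n"
proof -
  show "posA n \<subseteq> rootsA n"
    unfolding posA_eq by (auto intro: rootsA_diff)
  show D: "posD n \<subseteq> rootsD n"
    unfolding posD_eq by (auto intro: rootsD_diff rootsD_sum)
  show "posB n \<subseteq> rootsB n"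
    unfolding posB_eq using D rootsD_subset eps_in_rootsB by blast
  show "posC n \<subseteq> rootsC n"
    unfolding posC_eq using D rootsD_subset double_eps_in_rootsC by blast
qed

lemma card_pos_t_roots_A:
  assumes pos: "\<forall>x\<in>set bs. 0 < x" and n: "n = sum_list bs"
  shows "card (pos_t_roots n (rootsA n) (posA n) (block_simple_roots bs)) =
    length bs * (length bs - 1) div 2"
proof -
  let ?r = "length bs"
  have "card (pos_t_roots n (rootsA n) (posA n) (block_simple_roots bs)) =
      card (t_coords n (block_indicator bs) ?r ` posA n - {\<lambda>a. 0})"
    using block_simple_roots_subset_rootsA positive_roots_subset(1) n
    by (intro card_pos_t_roots_without_tail[OF pos n refl] vanishing_root_without_tail[OF n refl]
        subsetD[OF positive_roots_shapes(1)]) auto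
  also have "\<dots> = card (eps_diffs ?r)"
    using t_coords_image_posA[OF pos n] by simp
  also have "\<dots> = ?r * (?r - 1) div 2"
    using card_less_pairs[of ?r] by (simp add: card_eps_diffs)
  finally show ?thesis .
qed

lemma card_pos_t_roots_B:
  assumes pos: "\<forall>x\<in>set bs. 0 < x" and n: "n = sum_list bs"
  shows "card (pos_t_roots n (rootsB n) (posB n) (block_simple_roots bs)) =
    (length bs)\<^sup>2 + card {x. x < length bs \<and> 2 \<le> bs ! x}"
proof -
  let ?r = "length bs"
  have "card (pos_t_roots n (rootsB n) (posB n) (block_simple_roots bs)) =
      card (t_coords n (block_indicator bs) ?r ` posB n - {\<lambda>a. 0})"
    using block_simple_roots_subset_rootsBC(1) positive_roots_subset(3) n
    by (intro card_pos_t_roots_without_tail[OF pos n refl] vanishing_root_without_tail[OF n refl]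
        subsetD[OF positive_roots_shapes(2)]) auto
  also have "\<dots> = ?r * (?r - 1) + card {x. x < ?r \<and> 2 \<le> bs ! x} + ?r"
    using t_coords_image_posB[OF pos n] card_eps_families[of _ "{..<?r}"] by simp
  also have "\<dots> = ?r\<^sup>2 + card {x. x < ?r \<and> 2 \<le> bs ! x}"
    by (cases ?r) (simp_all add: power2_eq_square)
  finally show ?thesis .
qed

lemma card_pos_t_roots_C:
  assumes pos: "\<forall>x\<in>set bs. 0 < x" and n: "n = sum_list bs"
  shows "card (pos_t_roots n (rootsC n) (posC n) (block_simple_roots bs)) = (length bs)\<^sup>2"
proof -
  let ?r = "length bs"
  have "card (pos_t_roots n (rootsC n) (posC n) (block_simple_roots bs)) =
      card (t_coords n (block_indicator bs) ?r ` posC n - {\<lambda>a. 0})"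
    using block_simple_roots_subset_rootsBC(2) positive_roots_subset(4) n
    by (intro card_pos_t_roots_without_tail[OF pos n refl] vanishing_root_without_tail[OF n refl]
        subsetD[OF positive_roots_shapes(3)]) auto
  also have "\<dots> = ?r * (?r - 1) + ?r"
    using t_coords_image_posC[OF pos n] card_eps_families[of "{..<?r}" "{}"] by simp
  also have "\<dots> = ?r\<^sup>2"
    by (cases ?r) (simp_all add: power2_eq_square)
  finally show ?thesis .
qed

lemma card_pos_t_roots_D:
  assumes pos: "\<forall>x\<in>set bs. 0 < x" and n: "n = sum_list bs"
  shows "card (pos_t_roots n (rootsD n) (posD n) (block_simple_roots bs)) =
    (length bs)\<^sup>2 - length bs + card {x. x < length bs \<and> 2 \<le> bs ! x}"
proof -
  let ?r = "length bs"
  have "card (pos_t_roots n (rootsD n) (posD n) (block_simple_roots bs)) =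
      card (t_coords n (block_indicator bs) ?r ` posD n - {\<lambda>a. 0})"
    using block_simple_roots_subset_rootsD positive_roots_subset(2) n
    by (intro card_pos_t_roots_without_tail[OF pos n refl] vanishing_root_without_tail[OF n refl]
        subsetD[OF positive_roots_shapes(4)]) auto
  also have "\<dots> = ?r * (?r - 1) + card {x. x < ?r \<and> 2 \<le> bs ! x}"
    using t_coords_image_posD[OF pos n] card_eps_families[of _ "{}"] by simp
  also have "\<dots> = ?r\<^sup>2 - ?r + card {x. x < ?r \<and> 2 \<le> bs ! x}"
    by (simp add: power2_eq_square diff_mult_distrib2)
  finally show ?thesis .
qed

lemma card_pos_t_roots_B_tail:
  assumes pos: "\<forall>x\<in>set bs. 0 < x" and n: "n = sum_list bs" and len: "length bs = Suc r"
  shows "card (pos_t_roots n (rootsB n) (posB n) (block_simple_roots bs \<union> {lastB n})) =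
    r\<^sup>2 + card {x. x < r \<and> 2 \<le> bs ! x}"
proof -
  let ?Th = "block_simple_roots bs \<union> {lastB n}" and ?p = "n - 1"
  have fin: "finite ?Th"
    using block_simple_roots_finite by simp
  have p: "?p < n" "block_of bs ?p = r"
    using last_coordinate_in_last_block[OF pos len] n by simp_all
  have "card (pos_t_roots n (rootsB n) (posB n) ?Th) =
      card (t_coords n (block_indicator bs) r ` posB n - {\<lambda>a. 0})"
  proof (rule card_pos_t_roots_with_tail[OF pos n len])
    show "k < n \<and> block_of bs k = r" if "lastB n k \<noteq> 0" for k
      using that p by (simp add: lastB_def eps_apply split: if_splits)
    show "(\<Sum>k<n. lastB n k) \<noteq> 0"
      using p by (simp add: lastB_def sum_eps)
    show "?Th \<subseteq> rootsB n" "posB n \<subseteq> rootsB n"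
      using block_simple_roots_subset_rootsBC(1) eps_in_rootsB positive_roots_subset(3) p n
      by (auto simp: lastB_def)
    show "\<alpha> \<in> int_span ?Th"
      if "\<alpha> \<in> posB n" "t_coords n (block_indicator bs) r \<alpha> = (\<lambda>a. 0)" for \<alpha>
      using int_span_base[OF fin, of "lastB n"]
      by (intro vanishing_posB_root_with_tail[OF that(1) n len that(2) fin Un_upper1 p]) (simp add: lastB_def)
  qed
  also have "\<dots> = r * (r - 1) + card {x. x < r \<and> 2 \<le> bs ! x} + r"
    using t_coords_image_posB[OF pos n] len card_eps_families[of _ "{..<r}"] by simp
  also have "\<dots> = r\<^sup>2 + card {x. x < r \<and> 2 \<le> bs ! x}"
    by (cases r) (simp_all add: power2_eq_square)
  finally show ?thesis .
qed

lemma card_pos_t_roots_C_tail: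
  assumes pos: "\<forall>x\<in>set bs. 0 < x" and n: "n = sum_list bs" and len: "length bs = Suc r"
  shows "card (pos_t_roots n (rootsC n) (posC n) (block_simple_roots bs \<union> {lastC n})) = r\<^sup>2 + r"
proof -
  let ?Th = "block_simple_roots bs \<union> {lastC n}" and ?p = "n - 1"
  have fin: "finite ?Th"
    using block_simple_roots_finite by simp
  have p: "?p < n" "block_of bs ?p = r"
    using last_coordinate_in_last_block[OF pos len] n by simp_all
  have "card (pos_t_roots n (rootsC n) (posC n) ?Th) =
      card (t_coords n (block_indicator bs) r ` posC n - {\<lambda>a. 0})"
  proof (rule card_pos_t_roots_with_tail[OF pos n len])
    show "k < n \<and> block_of bs k = r" if "lastC n k \<noteq> 0" for k
      using that p by (simp add: lastC_def eps_apply split: if_splits)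
    show "(\<Sum>k<n. lastC n k) \<noteq> 0"
      using p by (simp add: lastC_def sum_distrib_left[symmetric] sum_eps)
    show "?Th \<subseteq> rootsC n" "posC n \<subseteq> rootsC n"
      using block_simple_roots_subset_rootsBC(2) double_eps_in_rootsC positive_roots_subset(4) p n
      by (auto simp: lastC_def)
    show "\<alpha> \<in> int_span ?Th"
      if "\<alpha> \<in> posC n" "t_coords n (block_indicator bs) r \<alpha> = (\<lambda>a. 0)" for \<alpha>
      using int_span_base[OF fin, of "lastC n"]
      by (intro vanishing_posC_root_with_tail[OF that(1) n len that(2) fin Un_upper1 p]) (simp add: lastC_def)
  qed
  also have "\<dots> = r * (r - 1) + r + r"
    using t_coords_image_posC[OF pos n] len card_eps_families[of "{..<r}" "{..<r}"] by simp
  also have "\<dots> = r\<^sup>2 + r"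
    by (cases r) (simp_all add: power2_eq_square)
  finally show ?thesis .
qed

lemma card_pos_t_roots_D_tail:
  assumes pos: "\<forall>x\<in>set bs. 0 < x" and n: "n = sum_list bs" and len: "length bs = Suc r"
    and last_block: "2 \<le> bs ! r"
  shows "card (pos_t_roots n (rootsD n) (posD n) (block_simple_roots bs \<union> {lastD n})) =
    r\<^sup>2 + card {x. x < r \<and> 2 \<le> bs ! x}"
proof -
  let ?Th = "block_simple_roots bs \<union> {lastD n}" and ?p = "n - 1" and ?q = "n - 2"
  have fin: "finite ?Th"
    using block_simple_roots_finite by simp
  have pq: "?p < n" "block_of bs ?p = r" "?q < n" "block_of bs ?q = r" "?q \<noteq> ?p"
    using block_of_last_block[OF len, of ?p] block_of_last_block[OF len, of ?q]
      last_block_start[OF len] last_block n by simp_all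
  have diff: "(\<lambda>k. eps i k - eps p k) \<in> int_span ?Th"
    if "i < n" "r \<le> block_of bs i" "p < n" "block_of bs p = r" for i p
    using tail_diff_in_int_span[OF fin Un_upper1 len] that n by simp
  have last: "(\<lambda>k. eps ?q k + eps ?p k) \<in> int_span ?Th"
    using int_span_base[OF fin] by (simp add: lastD_def)
  have "card (pos_t_roots n (rootsD n) (posD n) ?Th) =
      card (t_coords n (block_indicator bs) r ` posD n - {\<lambda>a. 0})"
  proof (rule card_pos_t_roots_with_tail[OF pos n len])
    show "k < n \<and> block_of bs k = r" if "lastD n k \<noteq> 0" for k
      using that pq by (auto simp: lastD_def eps_apply split: if_splits)
    show "(\<Sum>k<n. lastD n k) \<noteq> 0"
      using pq by (simp add: lastD_def sum.distrib sum_eps)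
    show "?Th \<subseteq> rootsD n"
      using block_simple_roots_subset_rootsD rootsD_sum[of ?q n ?p] pq n
      by (auto simp: lastD_def)
    show "posD n \<subseteq> rootsD n"
      by (rule positive_roots_subset)
    show "\<alpha> \<in> int_span ?Th"
      if \<alpha>: "\<alpha> \<in> posD n" and zero: "t_coords n (block_indicator bs) r \<alpha> = (\<lambda>a. 0)" for \<alpha>
    proof (rule vanishing_posD_root_in_int_span[OF \<alpha> n _ zero fin])
      show "(\<lambda>k. eps i k + eps j k) \<in> int_span ?Th"
        if "i < n" "j < n" "r \<le> block_of bs i" "r \<le> block_of bs j" for i j
        using int_span_add[OF int_span_add[OF diff[OF that(1,3) pq(3,4)] diff[OF that(2,4) pq(1,2)]] last]
        by simp
    qed (use len in auto)
  qed
  also have "\<dots> = r * (r - 1) + card {x. x < r \<and> 2 \<le> bs ! x} + r"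
    using t_coords_image_posD[OF pos n] len card_eps_families[of _ "{..<r}"] by simp
  also have "\<dots> = r\<^sup>2 + card {x. x < r \<and> 2 \<le> bs ! x}"
    by (cases r) (simp_all add: power2_eq_square)
  finally show ?thesis .
qed

lemma padded_block_list:
  fixes ns tail :: "nat list"
  assumes "\<forall>x\<in>set ns. 1 < x" "\<forall>x\<in>set tail. 0 < x"
  shows "\<forall>x\<in>set (ns @ replicate m 1 @ tail). 0 < x"
    "card {x. x < length ns + m \<and> 2 \<le> (ns @ replicate m 1 @ tail) ! x} = length ns"
proof -
  show "\<forall>x\<in>set (ns @ replicate m 1 @ tail). 0 < x"
    using assms by auto
  have entry: "(ns @ replicate m 1 @ tail) ! x = (if x < length ns then ns ! x else 1)"
    if "x < length ns + m" for x
    using that by (auto simp: nth_append)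
  have "{x. x < length ns + m \<and> 2 \<le> (ns @ replicate m 1 @ tail) ! x} = {..<length ns}"
  proof (intro set_eqI iffI)
    fix x assume "x \<in> {..<length ns}"
    then show "x \<in> {x. x < length ns + m \<and> 2 \<le> (ns @ replicate m 1 @ tail) ! x}"
      using entry[of x] assms(1) nth_mem[of x ns] by fastforce
  next
    fix x assume "x \<in> {x. x < length ns + m \<and> 2 \<le> (ns @ replicate m 1 @ tail) ! x}"
    then show "x \<in> {..<length ns}"
      using entry[of x] by (simp split: if_splits)
  qed
  then show "card {x. x < length ns + m \<and> 2 \<le> (ns @ replicate m 1 @ tail) ! x} = length ns"
    by simp
qed

lemma isotropy_summands_A:
  assumes n: "n = sum_list ns" and ns: "\<forall>x\<in>set ns. x \<ge> 1"
  shows "card (pos_t_roots n (rootsA n) (posA n) (block_simple_roots ns)) =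
    length ns * (length ns - 1) div 2"
proof -
  have "\<forall>x\<in>set ns. 0 < x"
    using ns by auto
  then show ?thesis
    using card_pos_t_roots_A n by blast
qed

lemma isotropy_summands_without_tail:
  fixes ns :: "nat list"
  assumes ns: "\<forall>x\<in>set ns. 1 < x" and n: "sum_list ns + m = n"
  defines "bs \<equiv> ns @ replicate m 1"
  shows "card (pos_t_roots n (rootsB n) (posB n) (block_simple_roots bs)) = (length ns + m)\<^sup>2 + length ns"
    and "card (pos_t_roots n (rootsC n) (posC n) (block_simple_roots bs)) = (length ns + m)\<^sup>2"
    and "card (pos_t_roots n (rootsD n) (posD n) (block_simple_roots bs)) = (length ns + m)\<^sup>2 - m"
proof -
  have "\<forall>x\<in>set ([] :: nat list). 0 < x"
    by simp
  note padded = padded_block_list[OF ns this, of m, unfolded append_Nil2, folded bs_def]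
  have pos: "\<forall>x\<in>set bs. 0 < x" and nontrivial: "card {x. x < length ns + m \<and> 2 \<le> bs ! x} = length ns"
    by (fact padded)+
  have sum: "n = sum_list bs" and len: "length bs = length ns + m"
    using n by (simp_all add: bs_def sum_list_replicate)
  show "card (pos_t_roots n (rootsB n) (posB n) (block_simple_roots bs)) = (length ns + m)\<^sup>2 + length ns"
    using card_pos_t_roots_B[OF pos sum] nontrivial len by simp
  show "card (pos_t_roots n (rootsC n) (posC n) (block_simple_roots bs)) = (length ns + m)\<^sup>2"
    using card_pos_t_roots_C[OF pos sum] len by simp
  show "card (pos_t_roots n (rootsD n) (posD n) (block_simple_roots bs)) = (length ns + m)\<^sup>2 - m"
    using card_pos_t_roots_D[OF pos sum] nontrivial len le_square[of "length ns + m"]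
    by (simp add: power2_eq_square)
qed

lemma isotropy_summands_with_tail:
  fixes ns :: "nat list"
  assumes ns: "\<forall>x\<in>set ns. 1 < x" and n: "sum_list ns + t + m = n" and t: "2 \<le> t"
  defines "bs \<equiv> ns @ replicate m 1 @ [t]"
  shows "card (pos_t_roots n (rootsB n) (posB n) (block_simple_roots bs \<union> {lastB n})) =
      (length ns + m)\<^sup>2 + length ns"
    and "card (pos_t_roots n (rootsC n) (posC n) (block_simple_roots bs \<union> {lastC n})) =
      (length ns + m)\<^sup>2 + (length ns + m)"
    and "card (pos_t_roots n (rootsD n) (posD n) (block_simple_roots bs \<union> {lastD n})) =
      (length ns + m)\<^sup>2 + length ns"
proof -
  have "\<forall>x\<in>set [t]. 0 < x"
    using t by simp
  note padded = padded_block_list[OF ns this, of m, folded bs_def]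
  have pos: "\<forall>x\<in>set bs. 0 < x" and nontrivial: "card {x. x < length ns + m \<and> 2 \<le> bs ! x} = length ns"
    by (fact padded)+
  have sum: "n = sum_list bs" and len: "length bs = Suc (length ns + m)"
    using n by (simp_all add: bs_def sum_list_replicate)
  have last: "2 \<le> bs ! (length ns + m)"
    using t by (simp add: bs_def nth_append)
  show "card (pos_t_roots n (rootsB n) (posB n) (block_simple_roots bs \<union> {lastB n})) =
      (length ns + m)\<^sup>2 + length ns"
    using card_pos_t_roots_B_tail[OF pos sum len] nontrivial by simp
  show "card (pos_t_roots n (rootsC n) (posC n) (block_simple_roots bs \<union> {lastC n})) =
      (length ns + m)\<^sup>2 + (length ns + m)"
    using card_pos_t_roots_C_tail[OF pos sum len] by simp
  show "card (pos_t_roots n (rootsD n) (posD n) (block_simple_roots bs \<union> {lastD n})) =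
      (length ns + m)\<^sup>2 + length ns"
    using card_pos_t_roots_D_tail[OF pos sum len last] nontrivial by simp
qed

theorem theorem3p1:
  shows
   \<comment> \<open>(A) SU(n)/S(U(n_1) x ... x U(n_s))\<close>
   "(\<forall>ns n. n = sum_list ns \<and> (\<forall>x\<in>set ns. x \<ge> 1) \<longrightarrow>
       card (pos_t_roots n (rootsA n) (posA n) (block_simple_roots ns))
         = length ns * (length ns - 1) div 2)
   \<and> \<comment> \<open>(B i)\<close>
   (\<forall>ns m n. n \<ge> 2 \<and> sum_list ns + m = n \<and> (\<forall>x\<in>set ns. x > 1) \<longrightarrow>
       card (pos_t_roots n (rootsB n) (posB n) (block_simple_roots (ns @ replicate m 1)))
         = (length ns + m)^2 + length ns)
   \<and> \<comment> \<open>(B ii)\<close>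
   (\<forall>ns m t n. t \<ge> 2 \<and> sum_list ns + t + m = n \<and> (\<forall>x\<in>set ns. x > 1) \<longrightarrow>
       card (pos_t_roots n (rootsB n) (posB n)
               (block_simple_roots (ns @ replicate m 1 @ [t]) \<union> {lastB n}))
         = (length ns + m)^2 + length ns)
   \<and> \<comment> \<open>(C i)\<close>
   (\<forall>ns m n. n \<ge> 3 \<and> sum_list ns + m = n \<and> (\<forall>x\<in>set ns. x > 1) \<longrightarrow>
       card (pos_t_roots n (rootsC n) (posC n) (block_simple_roots (ns @ replicate m 1)))
         = (length ns + m)^2)
   \<and> \<comment> \<open>(C ii)\<close>
   (\<forall>ns m t n. t \<ge> 3 \<and> sum_list ns + t + m = n \<and> (\<forall>x\<in>set ns. x > 1) \<longrightarrow>
       card (pos_t_roots n (rootsC n) (posC n)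
               (block_simple_roots (ns @ replicate m 1 @ [t]) \<union> {lastC n}))
         = (length ns + m)^2 + (length ns + m))
   \<and> \<comment> \<open>(D i)\<close>
   (\<forall>ns m n. n \<ge> 4 \<and> sum_list ns + m = n \<and> (\<forall>x\<in>set ns. x > 1) \<longrightarrow>
       card (pos_t_roots n (rootsD n) (posD n) (block_simple_roots (ns @ replicate m 1)))
         = (length ns + m)^2 - m)
   \<and> \<comment> \<open>(D ii)\<close>
   (\<forall>ns m t n. t \<ge> 4 \<and> sum_list ns + t + m = n \<and> (\<forall>x\<in>set ns. x > 1) \<longrightarrow>
       card (pos_t_roots n (rootsD n) (posD n)
               (block_simple_roots (ns @ replicate m 1 @ [t]) \<union> {lastD n}))
         = (length ns + m)^2 + length ns)"
  apply (intro conjI allI impI; elim conjE)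
  subgoal by (rule isotropy_summands_A)
  subgoal by (rule isotropy_summands_without_tail(1))
  subgoal by (rule isotropy_summands_with_tail(1)) simp_all
  subgoal by (rule isotropy_summands_without_tail(2))
  subgoal by (rule isotropy_summands_with_tail(2)) simp_all
  subgoal by (rule isotropy_summands_without_tail(3))
  subgoal by (rule isotropy_summands_with_tail(3)) simp_all
  done

end
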